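(* For a noiseless wiretap network as described in the context, define $$\mathcal{R}_{\epsilon,o}=\Lambda\Big(\mathrm{Proj}_{\mathcal{S}}\big(\overline{\mathrm{con}}(\Gamma_N^*\cap\Gamma_1\cap\Gamma_2\cap\Gamma_3)\cap\Gamma_4\cap\Gamma_5\cap\Gamma_6\big)\Big).$$ Then $\mathcal{R}_\epsilon^{(w)}\subseteq\mathcal{R}_{\epsilon,o}$.
   Context: Network: an acyclic directed graph $G=(\mathcal{V},\mathcal{E})$, each edge $e$ an error-free bit pipe of finite capacity $c_e$; $\mathrm{In}(v)$, $\mathrm{Out}(v)$ denote incoming/outgoing edges of $v$. Sources $\mathcal{S}$ and terminals $\mathcal{T}$ are disjoint; sources have no incoming edges, terminals no outgoing edges, only sources generate keys; terminal $t$ demands the messages of $\beta(t)\subseteq\mathcal{S}$; $\mathcal{A}_s\subset2^{\mathcal{E}}$ is the collection of possibly wiretapped edge sets. A code of blocklength $n$: source $s$ has message $M_s$ uniform on $[1:2^{\lfloor nr_{m_s}\rfloor}]$ and key $K_s$ uniform on $[1:2^{\lfloor nr_{k_s}\rfloor}]$, all mutually independent; edge $e$ carries $W_e\in\mathcal{W}_e$ (finite), with $W_e=\eta_e(M_s,K_s)$ for $e\in\mathrm{Out}(s)$, $s\in\mathcal{S}$, and $W_e=\eta_e(W_{e'}:e'\in\mathrm{In}(v))$ for $e\in\mathrm{Out}(v)$, $v\notin\mathcal{S}\cup\mathcal{T}$; terminal $t$ outputs $\hat M_{s\to t}=\eta_{t,s}(W_e:e\in\mathrm{In}(t))$ for $s\in\beta(t)$.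 The fixed-length rate of edge $e$ is $r_e^{(f)}=n^{-1}\log_2|\mathcal W_e|$. A rate vector $\mathbf r=(r_s:s\in\mathcal{S})$ is achievable at asymptotically zero error subject to weak secrecy if for every $\epsilon>0$ there is a code of sufficiently large blocklength $n$ with (i) $r_{m_s}^{(n)}\ge r_s-\epsilon$ for all $s$; (ii) $r_e^{(f)}\le c_e$ for all $e$; (iii) $n^{-1}I(M_{\mathcal{S}};W_\alpha)\le\epsilon$ for all $\alpha\in\mathcal{A}_s$, where $M_{\mathcal S}=(M_s:s\in\mathcal S)$, $W_\alpha=(W_e:e\in\alpha)$; (iv) $\Pr(\hat M_{s\to t}\ne M_s)\le\epsilon$ for all $t\in\mathcal{T}$, $s\in\beta(t)$. $\mathcal{R}_\epsilon^{(w)}$ is the set of such rate vectors. Entropy region: let $N=2|\mathcal{S}|+|\mathcal{E}|$ and index $N$ random variables by the labels $m_s,k_s$ ($s\in\mathcal S$) and $e$ ($e\in\mathcal E$). $\mathcal{H}_N$ is the set of real vectors $\mathbf h$ with coordinates $h_\gamma$ indexed by subsets $\gamma$ of these labels ($h_\emptyset=0$); for sets of labels we write e.g. $h_{m_s,k_s,\mathrm{Out}(s)}$ for the coordinate of the union. $\mathbf h$ is entropic if $h_\gamma=H(U_\gamma)$ for some jointly distributed finite-alphabet random variables $(U_{m_s},U_{k_s})_{s},(U_e)_e$, and $\Gamma_N^*$ is the set of entropic vectors. Define: $\Gamma_1=\{\mathbf h: h_{\{m_s,k_s:s\in\mathcal S\}}=\sum_{s\in\mathcal S}(h_{m_s}+h_{k_s})\}$;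 $\Gamma_2=\{\mathbf h: h_{m_s,k_s,\mathrm{Out}(s)}=h_{m_s,k_s}\ \forall s\in\mathcal S\}$; $\Gamma_3=\{\mathbf h: h_{\mathrm{In}(v)\cup\mathrm{Out}(v)}=h_{\mathrm{In}(v)}\ \forall v\in\mathcal V\setminus(\mathcal S\cup\mathcal T)\}$; $\Gamma_4=\{\mathbf h: h_{m_{\beta(t)},\mathrm{In}(t)}=h_{\mathrm{In}(t)}\ \forall t\in\mathcal T\}$ where $m_{\beta(t)}=\{m_s:s\in\beta(t)\}$; $\Gamma_5=\{\mathbf h: h_e\le c_e\ \forall e\in\mathcal E\}$; $\Gamma_6=\{\mathbf h: h_{m_{\mathcal S},\alpha}=h_{m_{\mathcal S}}+h_\alpha\ \forall\alpha\in\mathcal A_s\}$ where $m_{\mathcal S}=\{m_s:s\in\mathcal S\}$. $\overline{\mathrm{con}}(\mathcal A)$ is the smallest closed convex set containing $\mathcal A$. $\mathrm{Proj}_{\mathcal S}:\mathcal H_N\to\mathbb R^{|\mathcal S|}$ maps $\mathbf h$ to $(h_{m_s}:s\in\mathcal S)$. For $\mathcal A\subset\mathbb R^n$, $\Lambda(\mathcal A)=\{\mathbf x\in\mathbb R^n:\mathbf x\le\mathbf y\text{ componentwise for some }\mathbf y\in\mathcal A\}$. *)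

theory Defs
  imports "HOL-Analysis.Analysis" "HOL-Probability.Probability"
begin

text \<open>A network: vertex set V, edge set E (edges are abstract, with tail and head,
so parallel edges are allowed), sources S, terminals T, demands beta,
capacities c, and the collection Aw of possibly wiretapped edge sets.\<close>

definition In_edges :: "'e set \<Rightarrow> ('e \<Rightarrow> 'v) \<Rightarrow> 'v \<Rightarrow> 'e set" where
  "In_edges E hdv v = {e \<in> E. hdv e = v}"

definition Out_edges :: "'e set \<Rightarrow> ('e \<Rightarrow> 'v) \<Rightarrow> 'v \<Rightarrow> 'e set" where
  "Out_edges E tlv v = {e \<in> E. tlv e = v}"

definition wiretap_network ::
  "'v set \<Rightarrow> 'e set \<Rightarrow> ('e \<Rightarrow> 'v) \<Rightarrow> ('e \<Rightarrow> 'v) \<Rightarrow> 'v set \<Rightarrow> 'v set \<Rightarrow>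
   ('v \<Rightarrow> 'v set) \<Rightarrow> ('e \<Rightarrow> real) \<Rightarrow> 'e set set \<Rightarrow> bool" where
  "wiretap_network V E tlv hdv S T beta c Aw \<longleftrightarrow>
     finite V \<and> finite E \<and>
     (\<forall>e\<in>E. tlv e \<in> V \<and> hdv e \<in> V) \<and>
     acyclic {(tlv e, hdv e) | e. e \<in> E} \<and>
     S \<subseteq> V \<and> T \<subseteq> V \<and> S \<inter> T = {} \<and>
     (\<forall>s\<in>S. In_edges E hdv s = {}) \<and>
     (\<forall>t\<in>T. Out_edges E tlv t = {}) \<and>
     (\<forall>t\<in>T. beta t \<subseteq> S) \<and>
     (\<forall>e\<in>E. 0 \<le> c e) \<and>
     (\<forall>\<alpha>\<in>Aw. \<alpha> \<subseteq> E)"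

definition ent :: "'a pmf \<Rightarrow> real" where
  "ent p = - (\<Sum>x\<in>set_pmf p. pmf p x * log 2 (pmf p x))"

definition Hrv :: "'w pmf \<Rightarrow> ('w \<Rightarrow> 'a) \<Rightarrow> real" where
  "Hrv P X = ent (map_pmf X P)"

definition MI :: "'w pmf \<Rightarrow> ('w \<Rightarrow> 'a) \<Rightarrow> ('w \<Rightarrow> 'b) \<Rightarrow> real" where
  "MI P X Y = Hrv P X + Hrv P Y - Hrv P (\<lambda>w. (X w, Y w))"

definition idx_set :: "nat \<Rightarrow> real \<Rightarrow> nat set" where
  "idx_set n r = {1 .. 2 ^ nat \<lfloor>real n * r\<rfloor>}"

text \<open>Sample space of all (message, key) tuples; the uniform distribution on it
 makes all messages and keys independent and uniform.\<close>
definition sample_space :: "'v set \<Rightarrow> nat \<Rightarrow> ('v \<Rightarrow> real) \<Rightarrow> ('v \<Rightarrow> real)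
    \<Rightarrow> (('v \<Rightarrow> nat) \<times> ('v \<Rightarrow> nat)) set" where
  "sample_space S n rm rk = (PiE S (\<lambda>s. idx_set n (rm s))) \<times> (PiE S (\<lambda>s. idx_set n (rk s)))"

text \<open>A code of blocklength n: message rates rm, key rates rk, edge alphabets Alph,
 the edge symbols W e (m,k) as a function of all messages/keys, and decoders Dec t s.
 W must be produced by local encoding functions: outgoing edges of a source s
 depend only on (M_s,K_s); outgoing edges of an intermediate node v depend only on the
 symbols on In(v).\<close>
definition is_code ::
  "'v set \<Rightarrow> 'e set \<Rightarrow> ('e \<Rightarrow> 'v) \<Rightarrow> ('e \<Rightarrow> 'v) \<Rightarrow> 'v set \<Rightarrow> 'v set \<Rightarrow>
   nat \<Rightarrow> ('v \<Rightarrow> real) \<Rightarrow> ('v \<Rightarrow> real) \<Rightarrow> ('e \<Rightarrow> nat set) \<Rightarrow>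
   ('e \<Rightarrow> ('v \<Rightarrow> nat) \<times> ('v \<Rightarrow> nat) \<Rightarrow> nat) \<Rightarrow> bool" where
  "is_code V E tlv hdv S T n rm rk Alph W \<longleftrightarrow>
     0 < n \<and> (\<forall>s\<in>S. 0 \<le> rm s \<and> 0 \<le> rk s) \<and>
     (\<forall>e\<in>E. finite (Alph e)) \<and>
     (\<forall>e\<in>E. \<forall>\<omega>\<in>sample_space S n rm rk. W e \<omega> \<in> Alph e) \<and>
     (\<forall>s\<in>S. \<forall>e\<in>Out_edges E tlv s. \<exists>f. \<forall>(m,k)\<in>sample_space S n rm rk.
         W e (m,k) = f (m s, k s)) \<and>
     (\<forall>v\<in>V - (S \<union> T). \<forall>e\<in>Out_edges E tlv v. \<exists>f. \<forall>\<omega>\<in>sample_space S n rm rk.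
         W e \<omega> = f (restrict (\<lambda>e'. W e' \<omega>) (In_edges E hdv v)))"

definition decode_est :: "'e set \<Rightarrow> ('e \<Rightarrow> 'v) \<Rightarrow> ('v \<Rightarrow> 'v \<Rightarrow> ('e \<Rightarrow> nat) \<Rightarrow> nat) \<Rightarrow>
    ('e \<Rightarrow> ('v \<Rightarrow> nat) \<times> ('v \<Rightarrow> nat) \<Rightarrow> nat) \<Rightarrow> 'v \<Rightarrow> 'v \<Rightarrow> ('v \<Rightarrow> nat) \<times> ('v \<Rightarrow> nat) \<Rightarrow> nat" where
  "decode_est E hdv Dec W t s \<omega> = Dec t s (restrict (\<lambda>e. W e \<omega>) (In_edges E hdv t))"

definition weak_secrecy_region ::
  "'v set \<Rightarrow> 'e set \<Rightarrow> ('e \<Rightarrow> 'v) \<Rightarrow> ('e \<Rightarrow> 'v) \<Rightarrow> 'v set \<Rightarrow> 'v set \<Rightarrow>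
   ('v \<Rightarrow> 'v set) \<Rightarrow> ('e \<Rightarrow> real) \<Rightarrow> 'e set set \<Rightarrow> ('v \<Rightarrow> real) set" where
  "weak_secrecy_region V E tlv hdv S T beta c Aw =
    {r. (\<forall>v. v \<notin> S \<longrightarrow> r v = 0) \<and>
      (\<forall>\<epsilon>>0. \<exists>N. \<forall>n\<ge>N. \<exists>rm rk Alph W Dec.
         is_code V E tlv hdv S T n rm rk Alph W \<and>
         (let P = pmf_of_set (sample_space S n rm rk) in
           (\<forall>s\<in>S. real (nat \<lfloor>real n * rm s\<rfloor>) / real n \<ge> r s - \<epsilon>) \<and>
           (\<forall>e\<in>E. log 2 (real (card (Alph e))) / real n \<le> c e) \<and>
           (\<forall>\<alpha>\<in>Aw. MI P (\<lambda>(m,k). m) (\<lambda>\<omega>. restrict (\<lambda>e. W e \<omega>) \<alpha>) / real n \<le> \<epsilon>) \<and>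
           (\<forall>t\<in>T. \<forall>s\<in>beta t.
              measure_pmf.prob P {(m,k). decode_est E hdv Dec W t s (m,k) \<noteq> m s} \<le> \<epsilon>)))}"

datatype ('v, 'e) lbl = Msg 'v | Key 'v | Edg 'e

type_synonym ('v, 'e) hvec = "('v, 'e) lbl set \<Rightarrow> real"

definition labels :: "'v set \<Rightarrow> 'e set \<Rightarrow> ('v, 'e) lbl set" where
  "labels S E = Msg ` S \<union> Key ` S \<union> Edg ` E"

text \<open>H_N: real vectors indexed by subsets of the N labels, with h_{} = 0.
 (Coordinates for sets of labels not belonging to the network are fixed to 0.)\<close>
definition HN :: "'v set \<Rightarrow> 'e set \<Rightarrow> ('v, 'e) hvec set" where
  "HN S E = {h. h {} = 0 \<and> (\<forall>\<gamma>. \<not> \<gamma> \<subseteq> labels S E \<longrightarrow> h \<gamma> = 0)}"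

text \<open>Entropic vectors: entropy vectors of finite-alphabet random variables U_i
 (i a label), given by a finitely supported joint distribution p of (U_i)_i
 (alphabets encoded in nat).\<close>
definition entropic :: "'v set \<Rightarrow> 'e set \<Rightarrow> ('v, 'e) hvec set" where
  "entropic S E = {h \<in> HN S E. \<exists>p :: (('v,'e) lbl \<Rightarrow> nat) pmf. finite (set_pmf p) \<and>
      (\<forall>\<gamma>\<subseteq>labels S E. h \<gamma> = ent (map_pmf (\<lambda>u. restrict u \<gamma>) p))}"

definition Gamma1 :: "'v set \<Rightarrow> 'e set \<Rightarrow> ('v, 'e) hvec set" where
  "Gamma1 S E = {h \<in> HN S E. h (Msg ` S \<union> Key ` S) = (\<Sum>s\<in>S. h {Msg s} + h {Key s})}"

definition Gamma2 :: "'v set \<Rightarrow> 'e set \<Rightarrow> ('e \<Rightarrow> 'v) \<Rightarrow> ('v, 'e) hvec set" where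
  "Gamma2 S E tlv = {h \<in> HN S E. \<forall>s\<in>S.
      h ({Msg s, Key s} \<union> Edg ` Out_edges E tlv s) = h {Msg s, Key s}}"

definition Gamma3 :: "'v set \<Rightarrow> 'e set \<Rightarrow> ('e \<Rightarrow> 'v) \<Rightarrow> ('e \<Rightarrow> 'v) \<Rightarrow> 'v set \<Rightarrow> 'v set
    \<Rightarrow> ('v, 'e) hvec set" where
  "Gamma3 V E tlv hdv S T = {h \<in> HN S E. \<forall>v\<in>V - (S \<union> T).
      h (Edg ` (In_edges E hdv v \<union> Out_edges E tlv v)) = h (Edg ` In_edges E hdv v)}"

definition Gamma4 :: "'v set \<Rightarrow> 'e set \<Rightarrow> ('e \<Rightarrow> 'v) \<Rightarrow> 'v set \<Rightarrow> ('v \<Rightarrow> 'v set)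
    \<Rightarrow> ('v, 'e) hvec set" where
  "Gamma4 S E hdv T beta = {h \<in> HN S E. \<forall>t\<in>T.
      h (Msg ` beta t \<union> Edg ` In_edges E hdv t) = h (Edg ` In_edges E hdv t)}"

definition Gamma5 :: "'v set \<Rightarrow> 'e set \<Rightarrow> ('e \<Rightarrow> real) \<Rightarrow> ('v, 'e) hvec set" where
  "Gamma5 S E c = {h \<in> HN S E. \<forall>e\<in>E. h {Edg e} \<le> c e}"

definition Gamma6 :: "'v set \<Rightarrow> 'e set \<Rightarrow> 'e set set \<Rightarrow> ('v, 'e) hvec set" where
  "Gamma6 S E Aw = {h \<in> HN S E. \<forall>\<alpha>\<in>Aw.
      h (Msg ` S \<union> Edg ` \<alpha>) = h (Msg ` S) + h (Edg ` \<alpha>)}"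

definition convex_fun :: "('a \<Rightarrow> real) set \<Rightarrow> bool" where
  "convex_fun C \<longleftrightarrow> (\<forall>x\<in>C. \<forall>y\<in>C. \<forall>u::real. 0 \<le> u \<and> u \<le> 1 \<longrightarrow>
      (\<lambda>i. u * x i + (1 - u) * y i) \<in> C)"

text \<open>Smallest closed convex set containing A (product topology = Euclidean topology on
 the finitely many relevant coordinates).\<close>
definition closed_conv :: "('a \<Rightarrow> real) set \<Rightarrow> ('a \<Rightarrow> real) set" where
  "closed_conv A = \<Inter>{C. A \<subseteq> C \<and> closed C \<and> convex_fun C}"

definition ProjS :: "'v set \<Rightarrow> ('v, 'e) hvec \<Rightarrow> ('v \<Rightarrow> real)" where
  "ProjS S h = (\<lambda>s. if s \<in> S then h {Msg s} else 0)"

text \<open>Vectors of R^{|S|} are represented as functions vanishing outside S.\<close>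
definition Lambda :: "'v set \<Rightarrow> ('v \<Rightarrow> real) set \<Rightarrow> ('v \<Rightarrow> real) set" where
  "Lambda S A = {x. (\<forall>v. v \<notin> S \<longrightarrow> x v = 0) \<and> (\<exists>y\<in>A. \<forall>s\<in>S. x s \<le> y s)}"

definition outer_region ::
  "'v set \<Rightarrow> 'e set \<Rightarrow> ('e \<Rightarrow> 'v) \<Rightarrow> ('e \<Rightarrow> 'v) \<Rightarrow> 'v set \<Rightarrow> 'v set \<Rightarrow>
   ('v \<Rightarrow> 'v set) \<Rightarrow> ('e \<Rightarrow> real) \<Rightarrow> 'e set set \<Rightarrow> ('v \<Rightarrow> real) set" where
  "outer_region V E tlv hdv S T beta c Aw =
    Lambda S (ProjS S `
      (closed_conv (entropic S E \<inter> Gamma1 S E \<inter> Gamma2 S E tlv \<inter> Gamma3 V E tlv hdv S T)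
       \<inter> Gamma4 S E hdv T beta \<inter> Gamma5 S E c \<inter> Gamma6 S E Aw))"

end

theory Submission
  imports Defs
begin

(* A code of blocklength n yields the vector of joint entropies of its messages, keys and edge
   symbols divided by n.  Scaling towards the zero vector, it lies in the closed convex hull of
   the entropic vectors obeying Gamma1-Gamma3; its edge entropies respect the capacities; and by
   Fano's inequality and the secrecy condition it satisfies Gamma4, Gamma6 and the rate
   constraint up to a slack that vanishes with the error probability.  A common limit point of
   such vectors lies in the outer region, provided the vectors stay in a compact set.

   For the raw messages and keys this fails, since their rates are unbounded.  So each message
   is cut down to its first (about n r) bits, its head, and the remaining message bits together
   with the key are compressed: enumerate them, for each head, in the order of the symbols the
   source sends, and replace an index by the number of places before it where these symbols
   change.  There are at most (number of heads) * (number of symbol tuples) + 1 such classes,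
   the source symbols are a function of head and class, and all normalised entropies become
   bounded. *)

section \<open>Entropy of finite random variables\<close>

lemma sum_mult_log_inverse_le:
  fixes w :: "'i \<Rightarrow> real"
  assumes fin: "finite I" and pos: "\<And>i. i \<in> I \<Longrightarrow> 0 < w i" and ne: "I \<noteq> {}"
  shows "(\<Sum>i\<in>I. w i * log 2 (1 / w i)) \<le> sum w I * log 2 (real (card I) / sum w I)"
proof -
  define q where "q = sum w I"
  define k where "k = real (card I)"
  have qpos: "0 < q" unfolding q_def using fin ne pos by (simp add: sum_pos)
  have kpos: "0 < k" unfolding k_def using fin ne by (simp add: card_gt_0_iff)
  have pt: "w i * log 2 (1 / w i) - w i * log 2 (k / q) \<le> (q / k - w i) / ln 2" if i: "i \<in> I" for i
  proof -
    have wi: "0 < w i" using pos i by auto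
    have "w i * log 2 (1 / w i) - w i * log 2 (k / q) = w i * log 2 (q / (k * w i))"
      using wi kpos qpos by (simp add: log_divide log_mult algebra_simps)
    also have "\<dots> = w i * ln (q / (k * w i)) / ln 2" by (simp add: log_def)
    also have "\<dots> \<le> w i * (q / (k * w i) - 1) / ln 2"
      using wi kpos qpos by (intro divide_right_mono mult_left_mono ln_le_minus_one) auto
    also have "\<dots> = (q / k - w i) / ln 2" using wi kpos by (simp add: field_simps)
    finally show ?thesis .
  qed
  have "(\<Sum>i\<in>I. w i * log 2 (1 / w i)) - q * log 2 (k / q) =
        (\<Sum>i\<in>I. w i * log 2 (1 / w i) - w i * log 2 (k / q))"
    by (simp add: sum_subtractf q_def sum_distrib_right)
  also have "\<dots> \<le> (\<Sum>i\<in>I. (q / k - w i) / ln 2)" by (rule sum_mono) (use pt in auto)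
  also have "\<dots> = (k * (q / k) - q) / ln 2"
    by (simp add: sum_divide_distrib[symmetric] sum_subtractf q_def k_def)
  also have "\<dots> = 0" using kpos by simp
  finally show ?thesis unfolding q_def k_def by simp
qed

lemma sum_mult_log_inverse_le_card:
  fixes w :: "'i \<Rightarrow> real"
  assumes fin: "finite I" and ne: "I \<noteq> {}" and pos: "\<And>i. i \<in> I \<Longrightarrow> 0 < w i"
    and card: "card I \<le> k"
  shows "(\<Sum>i\<in>I. w i * log 2 (1 / w i)) \<le> sum w I * log 2 (real k) + sum w I * log 2 (1 / sum w I)"
proof -
  have q: "0 < sum w I" using fin ne pos by (simp add: sum_pos)
  have cI: "0 < card I" using fin ne by (simp add: card_gt_0_iff)
  have "(\<Sum>i\<in>I. w i * log 2 (1 / w i)) \<le> sum w I * log 2 (real (card I) / sum w I)"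
    by (rule sum_mult_log_inverse_le[OF fin pos ne])
  also have "\<dots> = sum w I * log 2 (real (card I)) + sum w I * log 2 (1 / sum w I)"
    using q cI by (simp add: log_divide algebra_simps)
  also have "\<dots> \<le> sum w I * log 2 (real k) + sum w I * log 2 (1 / sum w I)"
    using card cI q by (intro add_right_mono mult_left_mono) auto
  finally show ?thesis .
qed

lemma ent_eq_sum_log_inverse: "ent p = (\<Sum>x\<in>set_pmf p. pmf p x * log 2 (1 / pmf p x))"
  unfolding ent_def by (simp add: sum_negf[symmetric] log_divide set_pmf_eq' pmf_pos del: set_pmf_iff)

lemma ent_le_log_card:
  assumes "finite (set_pmf p)"
  shows "ent p \<le> log 2 (real (card (set_pmf p)))"
proof -
  have ne: "set_pmf p \<noteq> {}" by (rule set_pmf_not_empty)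
  have s1: "sum (pmf p) (set_pmf p) = 1"
    using assms by (simp add: sum_pmf_eq_1)
  have "ent p = (\<Sum>x\<in>set_pmf p. pmf p x * log 2 (1 / pmf p x))"
    by (rule ent_eq_sum_log_inverse)
  also have "\<dots> \<le> sum (pmf p) (set_pmf p) * log 2 (real (card (set_pmf p)) / sum (pmf p) (set_pmf p))"
    by (rule sum_mult_log_inverse_le) (use assms ne in \<open>auto simp: pmf_positive\<close>)
  finally show ?thesis using s1 by simp
qed

lemma ent_nonneg: "0 \<le> ent p"
proof -
  have "pmf p x * log 2 (pmf p x) \<le> 0" if "x \<in> set_pmf p" for x
  proof -
    have "0 < pmf p x" "pmf p x \<le> 1" using that by (auto simp: pmf_positive pmf_le_1)
    then show ?thesis by (simp add: mult_nonneg_nonpos)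
  qed
  then show ?thesis unfolding ent_def by (simp add: sum_nonpos)
qed

lemma pmf_map_eq_sum_fiber:
  assumes "finite (set_pmf Q)"
  shows "pmf (map_pmf X Q) x = sum (pmf Q) {w \<in> set_pmf Q. X w = x}"
proof -
  have "pmf (map_pmf X Q) x = measure Q (X -` {x})" by (simp add: pmf_map)
  also have "\<dots> = measure Q {w \<in> set_pmf Q. X w = x}"
    by (subst measure_Int_set_pmf[symmetric]) (auto intro!: arg_cong[where f="measure Q"])
  also have "\<dots> = sum (pmf Q) {w \<in> set_pmf Q. X w = x}"
    using assms by (simp add: measure_measure_pmf_finite)
  finally show ?thesis .
qed

lemma sum_pmf_map_reindex:
  assumes fin: "finite (set_pmf Q)"
  shows "(\<Sum>y\<in>X ` set_pmf Q. pmf (map_pmf X Q) y * g y) = (\<Sum>w\<in>set_pmf Q. pmf Q w * g (X w))"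
proof -
  have "(\<Sum>w\<in>set_pmf Q. pmf Q w * g (X w)) =
     (\<Sum>y\<in>X ` set_pmf Q. \<Sum>w\<in>{w \<in> set_pmf Q. X w = y}. pmf Q w * g (X w))"
    using fin by (rule sum.image_gen)
  also have "\<dots> = (\<Sum>y\<in>X ` set_pmf Q. \<Sum>w\<in>{w \<in> set_pmf Q. X w = y}. pmf Q w * g y)"
    by (intro sum.cong refl) auto
  also have "\<dots> = (\<Sum>y\<in>X ` set_pmf Q. pmf (map_pmf X Q) y * g y)"
    by (simp add: pmf_map_eq_sum_fiber[OF fin] sum_distrib_right)
  finally show ?thesis by simp
qed

lemma Hrv_eq_sum:
  assumes fin: "finite (set_pmf Q)"
  shows "Hrv Q X = - (\<Sum>w\<in>set_pmf Q. pmf Q w * log 2 (pmf (map_pmf X Q) (X w)))"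
  unfolding Hrv_def ent_def by (simp add: sum_pmf_map_reindex[OF fin])

lemma pmf_map_pmf_pos:
  "w \<in> set_pmf Q \<Longrightarrow> 0 < pmf (map_pmf X Q) (X w)"
  by (simp add: pmf_positive set_map_pmf)

lemma Hrv_nonneg: "0 \<le> Hrv Q X" unfolding Hrv_def by (rule ent_nonneg)

lemma Hrv_const: "Hrv Q (\<lambda>w. c) = 0"
  unfolding Hrv_def ent_def by (simp add: map_pmf_const)

lemma Hrv_cong:
  "(\<And>w. w \<in> set_pmf Q \<Longrightarrow> X w = Y w) \<Longrightarrow> Hrv Q X = Hrv Q Y"
  unfolding Hrv_def by (metis map_pmf_cong)

lemma Hrv_comp_le:
  assumes fin: "finite (set_pmf Q)"
  shows "Hrv Q (\<lambda>w. f (X w)) \<le> Hrv Q X"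
proof -
  have "pmf Q w * log 2 (pmf (map_pmf X Q) (X w)) \<le> pmf Q w * log 2 (pmf (map_pmf (\<lambda>w. f (X w)) Q) (f (X w)))"
    if "w \<in> set_pmf Q" for w
  proof (intro mult_left_mono)
    have "pmf (map_pmf X Q) (X w) = measure Q (X -` {X w})" by (simp add: pmf_map)
    also have "\<dots> \<le> measure Q ((\<lambda>w. f (X w)) -` {f (X w)})"
      by (intro measure_pmf.finite_measure_mono) auto
    also have "\<dots> = pmf (map_pmf (\<lambda>w. f (X w)) Q) (f (X w))" by (simp add: pmf_map)
    finally show "log 2 (pmf (map_pmf X Q) (X w)) \<le> log 2 (pmf (map_pmf (\<lambda>w. f (X w)) Q) (f (X w)))"
      using pmf_map_pmf_pos[OF that, of X] by simp
  qed simp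
  then show ?thesis unfolding Hrv_eq_sum[OF fin] by (simp add: sum_mono)
qed

lemma Hrv_le_of_fun:
  assumes fin: "finite (set_pmf Q)" and "\<And>w. w \<in> set_pmf Q \<Longrightarrow> X w = f (Y w)"
  shows "Hrv Q X \<le> Hrv Q Y"
proof -
  have "Hrv Q X = Hrv Q (\<lambda>w. f (Y w))" using assms(2) by (rule Hrv_cong)
  also have "\<dots> \<le> Hrv Q Y" by (rule Hrv_comp_le[OF fin])
  finally show ?thesis .
qed

lemma Hrv_eq_of_fun:
  assumes fin: "finite (set_pmf Q)" and "\<And>w. w \<in> set_pmf Q \<Longrightarrow> X w = f (Y w)"
    and "\<And>w. w \<in> set_pmf Q \<Longrightarrow> Y w = g (X w)"
  shows "Hrv Q X = Hrv Q Y"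
  using Hrv_le_of_fun[of Q X f Y, OF fin assms(2)] Hrv_le_of_fun[of Q Y g X, OF fin assms(3)] by simp

lemma Hrv_le_log_card:
  assumes "finite A" and "\<And>w. w \<in> set_pmf Q \<Longrightarrow> X w \<in> A"
  shows "Hrv Q X \<le> log 2 (real (card A))"
proof -
  have sub: "set_pmf (map_pmf X Q) \<subseteq> A" using assms(2) by auto
  then have fin: "finite (set_pmf (map_pmf X Q))" using assms(1) by (rule finite_subset)
  then have pos: "0 < card (set_pmf (map_pmf X Q))" by (simp add: card_gt_0_iff set_pmf_not_empty)
  have "Hrv Q X \<le> log 2 (real (card (set_pmf (map_pmf X Q))))"
    unfolding Hrv_def by (rule ent_le_log_card[OF fin])
  also have "\<dots> \<le> log 2 (real (card A))"
    using card_mono[OF assms(1) sub] pos by simp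
  finally show ?thesis .
qed

(* The space of measure_pmf Q is UNIV, so the information theory of HOL-Probability only
   applies to random variables with finite range on all of UNIV.  Precomposing with a
   retraction onto the finite support achieves this without changing any distribution. *)

definition support_retract :: "'w pmf \<Rightarrow> 'w \<Rightarrow> 'w" where
  "support_retract Q w = (if w \<in> set_pmf Q then w else (SOME v. v \<in> set_pmf Q))"

lemma support_retract_in: "support_retract Q w \<in> set_pmf Q"
  unfolding support_retract_def using set_pmf_not_empty[of Q] by (auto intro: someI_ex)

lemma support_retract_id: "w \<in> set_pmf Q \<Longrightarrow> support_retract Q w = w"
  unfolding support_retract_def by simp

lemma range_support_retract: "(\<lambda>w. V (support_retract Q w)) ` UNIV = V ` set_pmf Q"
proof (intro equalityI subsetI)
  fix y assume "y \<in> (\<lambda>w. V (support_retract Q w)) ` UNIV"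
  then obtain w where "y = V (support_retract Q w)" by auto
  then show "y \<in> V ` set_pmf Q" using support_retract_in[of Q w] by blast
next
  fix y assume "y \<in> V ` set_pmf Q"
  then obtain w where "w \<in> set_pmf Q" "y = V w" by auto
  then show "y \<in> (\<lambda>w. V (support_retract Q w)) ` UNIV" by (metis support_retract_id rangeI)
qed

lemma simple_function_support_retract:
  assumes "finite (set_pmf Q)"
  shows "simple_function (measure_pmf Q) (\<lambda>w. V (support_retract Q w))"
  unfolding simple_function_def using assms by (simp add: range_support_retract)

lemma prob_support_retract_Int:
  "measure_pmf.prob Q ((\<lambda>w. V (support_retract Q w)) -` {t} \<inter> space (measure_pmf Q)) = pmf (map_pmf V Q) t"
proof -
  have "measure_pmf.prob Q ((\<lambda>w. V (support_retract Q w)) -` {t} \<inter> space (measure_pmf Q)) =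
        measure_pmf.prob Q ((\<lambda>w. V (support_retract Q w)) -` {t} \<inter> set_pmf Q)"
    by (simp add: measure_Int_set_pmf)
  also have "\<dots> = measure_pmf.prob Q (V -` {t} \<inter> set_pmf Q)"
    by (intro arg_cong[where f="measure_pmf.prob Q"]) (auto simp: support_retract_id)
  also have "\<dots> = pmf (map_pmf V Q) t" by (simp add: measure_Int_set_pmf pmf_map)
  finally show ?thesis .
qed

lemma prob_support_retract:
  "measure_pmf.prob Q ((\<lambda>w. V (support_retract Q w)) -` {t}) = pmf (map_pmf V Q) t"
  using prob_support_retract_Int[of Q V t] by simp

lemma simple_distributed_support_retract:
  assumes "finite (set_pmf Q)"
  shows "simple_distributed (measure_pmf Q) (\<lambda>w. V (support_retract Q w)) (pmf (map_pmf V Q))"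
  by (rule measure_pmf.simple_distributedI[OF simple_function_support_retract[OF assms]]) (simp_all add: prob_support_retract)

lemma conditional_mutual_information_pmf_nonneg:
  assumes fin: "finite (set_pmf Q)"
  shows "0 \<le> (\<Sum>w\<in>set_pmf Q. pmf Q w * log 2 (pmf (map_pmf (\<lambda>w. (X w, Y w, Z w)) Q) (X w, Y w, Z w) /
           (pmf (map_pmf (\<lambda>w. (X w, Z w)) Q) (X w, Z w) *
            (pmf (map_pmf (\<lambda>w. (Y w, Z w)) Q) (Y w, Z w) / pmf (map_pmf Z Q) (Z w)))))"
proof -
  interpret information_space "measure_pmf Q" 2 by unfold_locales simp
  let ?c = "support_retract Q"
  define pxyz where "pxyz = pmf (map_pmf (\<lambda>w. (X w, Y w, Z w)) Q)"
  define pxz where "pxz = pmf (map_pmf (\<lambda>w. (X w, Z w)) Q)"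
  define pyz where "pyz = pmf (map_pmf (\<lambda>w. (Y w, Z w)) Q)"
  define pz where "pz = pmf (map_pmf Z Q)"
  have sX: "simple_function (measure_pmf Q) (\<lambda>w. X (?c w))" by (rule simple_function_support_retract[OF fin])
  have sY: "simple_function (measure_pmf Q) (\<lambda>w. Y (?c w))" by (rule simple_function_support_retract[OF fin])
  have sZ: "simple_function (measure_pmf Q) (\<lambda>w. Z (?c w))" by (rule simple_function_support_retract[OF fin])
  have Pz: "simple_distributed (measure_pmf Q) (\<lambda>w. Z (?c w)) pz"
    unfolding pz_def by (rule simple_distributed_support_retract[OF fin])
  have Pyz: "simple_distributed (measure_pmf Q) (\<lambda>w. (Y (?c w), Z (?c w))) pyz"
    unfolding pyz_def using simple_distributed_support_retract[OF fin, of "\<lambda>w. (Y w, Z w)"] by simp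
  have Pxz: "simple_distributed (measure_pmf Q) (\<lambda>w. (X (?c w), Z (?c w))) pxz"
    unfolding pxz_def using simple_distributed_support_retract[OF fin, of "\<lambda>w. (X w, Z w)"] by simp
  have Pxyz: "simple_distributed (measure_pmf Q) (\<lambda>w. (X (?c w), Y (?c w), Z (?c w))) pxyz"
    unfolding pxyz_def using simple_distributed_support_retract[OF fin, of "\<lambda>w. (X w, Y w, Z w)"] by simp
  have "0 \<le> (\<Sum>(x, y, z)\<in>(\<lambda>w. (X (?c w), Y (?c w), Z (?c w)))`space (measure_pmf Q).
      pxyz (x, y, z) * log 2 (pxyz (x, y, z) / (pxz (x, z) * (pyz (y,z) / pz z))))"
    using conditional_mutual_information_nonneg[OF sX sY sZ]
      conditional_mutual_information_eq[OF Pz Pyz Pxz Pxyz] by simp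
  also have "\<dots> = (\<Sum>t\<in>(\<lambda>w. (X w, Y w, Z w)) ` set_pmf Q.
      pxyz t * (\<lambda>(x,y,z). log 2 (pxyz (x, y, z) / (pxz (x, z) * (pyz (y,z) / pz z)))) t)"
    using range_support_retract[of "\<lambda>w. (X w, Y w, Z w)" Q]
    by (intro sum.cong) (auto simp: split_beta)
  also have "\<dots> = (\<Sum>w\<in>set_pmf Q. pmf Q w * log 2 (pxyz (X w, Y w, Z w) /
       (pxz (X w, Z w) * (pyz (Y w, Z w) / pz (Z w)))))"
    unfolding pxyz_def by (subst sum_pmf_map_reindex[OF fin]) simp
  finally show ?thesis unfolding pxyz_def pxz_def pyz_def pz_def .
qed

lemma Hrv_submodular:
  assumes fin: "finite (set_pmf Q)"
  shows "Hrv Q (\<lambda>w. (X w, Y w, Z w)) + Hrv Q Z \<le> Hrv Q (\<lambda>w. (X w, Z w)) + Hrv Q (\<lambda>w. (Y w, Z w))"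
proof -
  define pxyz where "pxyz = pmf (map_pmf (\<lambda>w. (X w, Y w, Z w)) Q)"
  define pxz where "pxz = pmf (map_pmf (\<lambda>w. (X w, Z w)) Q)"
  define pyz where "pyz = pmf (map_pmf (\<lambda>w. (Y w, Z w)) Q)"
  define pz where "pz = pmf (map_pmf Z Q)"
  have "0 \<le> (\<Sum>w\<in>set_pmf Q. pmf Q w * log 2 (pxyz (X w, Y w, Z w) /
       (pxz (X w, Z w) * (pyz (Y w, Z w) / pz (Z w)))))"
    unfolding pxyz_def pxz_def pyz_def pz_def by (rule conditional_mutual_information_pmf_nonneg[OF fin])
  also have "\<dots> = (\<Sum>w\<in>set_pmf Q. pmf Q w * log 2 (pxyz (X w, Y w, Z w))
       - pmf Q w * log 2 (pxz (X w, Z w)) - pmf Q w * log 2 (pyz (Y w, Z w))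
       + pmf Q w * log 2 (pz (Z w)))"
  proof (intro sum.cong refl)
    fix w assume w: "w \<in> set_pmf Q"
    have p1: "0 < pxyz (X w, Y w, Z w)" unfolding pxyz_def using pmf_map_pmf_pos[OF w, of "\<lambda>w. (X w, Y w, Z w)"] by simp
    have p2: "0 < pxz (X w, Z w)" unfolding pxz_def using pmf_map_pmf_pos[OF w, of "\<lambda>w. (X w, Z w)"] by simp
    have p3: "0 < pyz (Y w, Z w)" unfolding pyz_def using pmf_map_pmf_pos[OF w, of "\<lambda>w. (Y w, Z w)"] by simp
    have p4: "0 < pz (Z w)" unfolding pz_def using pmf_map_pmf_pos[OF w, of Z] by simp
    show "pmf Q w * log 2 (pxyz (X w, Y w, Z w) / (pxz (X w, Z w) * (pyz (Y w, Z w) / pz (Z w)))) =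
      pmf Q w * log 2 (pxyz (X w, Y w, Z w)) - pmf Q w * log 2 (pxz (X w, Z w)) -
      pmf Q w * log 2 (pyz (Y w, Z w)) + pmf Q w * log 2 (pz (Z w))"
      using p1 p2 p3 p4 by (simp add: log_divide log_mult algebra_simps)
  qed
  also have "\<dots> = - Hrv Q (\<lambda>w. (X w, Y w, Z w)) + Hrv Q (\<lambda>w. (X w, Z w)) + Hrv Q (\<lambda>w. (Y w, Z w)) - Hrv Q Z"
    unfolding Hrv_eq_sum[OF fin] pxyz_def pxz_def pyz_def pz_def
    by (simp add: sum.distrib sum_subtractf)
  finally show ?thesis by simp
qed

lemma Hrv_subadditive:
  assumes fin: "finite (set_pmf Q)"
  shows "Hrv Q (\<lambda>w. (X w, Y w)) \<le> Hrv Q X + Hrv Q Y"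
proof -
  have "Hrv Q (\<lambda>w. (X w, Y w, ())) + Hrv Q (\<lambda>w. ()) \<le> Hrv Q (\<lambda>w. (X w, ())) + Hrv Q (\<lambda>w. (Y w, ()))"
    by (rule Hrv_submodular[OF fin])
  moreover have "Hrv Q (\<lambda>w. (X w, Y w, ())) = Hrv Q (\<lambda>w. (X w, Y w))"
    by (rule Hrv_eq_of_fun[of Q "\<lambda>w. (X w, Y w, ())" "\<lambda>t. (fst t, snd t, ())" "\<lambda>w. (X w, Y w)" "\<lambda>t. (fst t, fst (snd t))"]) (simp_all add: fin)
  moreover have "Hrv Q (\<lambda>w. (X w, ())) = Hrv Q X"
    by (rule Hrv_eq_of_fun[of Q "\<lambda>w. (X w, ())" "\<lambda>a. (a,())" X fst]) (simp_all add: fin)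
  moreover have "Hrv Q (\<lambda>w. (Y w, ())) = Hrv Q Y"
    by (rule Hrv_eq_of_fun[of Q "\<lambda>w. (Y w, ())" "\<lambda>a. (a,())" Y fst]) (simp_all add: fin)
  moreover have "Hrv Q (\<lambda>w. ()) = 0" by (rule Hrv_const)
  ultimately show ?thesis by linarith
qed

lemma Hrv_mutual_info_comp_le:
  assumes fin: "finite (set_pmf Q)"
  shows "Hrv Q (\<lambda>w. f (X w)) + Hrv Q Y - Hrv Q (\<lambda>w. (f (X w), Y w)) \<le> Hrv Q X + Hrv Q Y - Hrv Q (\<lambda>w. (X w, Y w))"
proof -
  have sm: "Hrv Q (\<lambda>w. (X w, Y w, f (X w))) + Hrv Q (\<lambda>w. f (X w)) \<le> Hrv Q (\<lambda>w. (X w, f (X w))) + Hrv Q (\<lambda>w. (Y w, f (X w)))"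
    by (rule Hrv_submodular[OF fin])
  have e1: "Hrv Q (\<lambda>w. (X w, Y w, f (X w))) = Hrv Q (\<lambda>w. (X w, Y w))"
    by (rule Hrv_eq_of_fun[of Q _ "\<lambda>(a,b). (a,b,f a)" _ "\<lambda>(a,b,c). (a,b)"]) (auto simp: fin)
  have e2: "Hrv Q (\<lambda>w. (X w, f (X w))) = Hrv Q X"
    by (rule Hrv_eq_of_fun[of Q _ "\<lambda>a. (a, f a)" _ "fst"]) (auto simp: fin)
  have e3: "Hrv Q (\<lambda>w. (Y w, f (X w))) = Hrv Q (\<lambda>w. (f (X w), Y w))"
    by (rule Hrv_eq_of_fun[of Q _ "\<lambda>(a,b). (b,a)" _ "\<lambda>(a,b). (b,a)"]) (auto simp: fin)
  show ?thesis using sm e1 e2 e3 by linarith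
qed

lemma binary_entropy_le_one:
  assumes "0 < p" "0 < q" "p + q = 1"
  shows "p * log 2 (1 / p) + q * log 2 (1 / q) \<le> 1"
proof -
  define w where "w = (\<lambda>b::bool. if b then p else q)"
  have "(\<Sum>b\<in>UNIV. w b * log 2 (1 / w b)) \<le> sum w UNIV * log 2 (real (card (UNIV :: bool set)) / sum w UNIV)"
    by (rule sum_mult_log_inverse_le) (auto simp: w_def assms)
  moreover have "sum w UNIV = 1" using assms by (simp add: w_def UNIV_bool)
  ultimately show ?thesis by (simp add: w_def UNIV_bool)
qed

lemma ent_option_le:
  fixes p :: "'a option pmf"
  assumes fin: "finite (set_pmf p)" and A: "finite A" "A \<noteq> {}" "set_pmf p \<subseteq> insert None (Some ` A)"
  shows "ent p \<le> 1 + (1 - pmf p None) * log 2 (real (card A))"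
proof -
  define S where "S = set_pmf p"
  define T where "T = S - {None}"
  define q where "q = sum (pmf p) T"
  have s1: "sum (pmf p) S = 1" unfolding S_def using fin by (simp add: sum_pmf_eq_1)
  have finT: "finite T" unfolding T_def S_def using fin by simp
  have cA: "1 \<le> card A" using A by (simp add: Suc_le_eq card_gt_0_iff)
  have logA: "0 \<le> log 2 (real (card A))" using cA by simp
  have entS: "ent p = (\<Sum>x\<in>S. pmf p x * log 2 (1 / pmf p x))"
    unfolding S_def by (rule ent_eq_sum_log_inverse)
  have p0q: "pmf p None + q = 1"
  proof (cases "None \<in> S")
    case True
    then show ?thesis using s1 fin unfolding q_def T_def S_def by (simp add: sum.remove)
  next
    case False
    then have "T = S" "pmf p None = 0" unfolding T_def S_def by (auto simp: set_pmf_eq)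
    then show ?thesis using s1 unfolding q_def by simp
  qed
  show ?thesis
  proof (cases "T = {}")
    case True
    then have "S \<subseteq> {None}" unfolding T_def by auto
    moreover have "S \<noteq> {}" unfolding S_def by (rule set_pmf_not_empty)
    ultimately have SN: "S = {None}" by auto
    then have "pmf p None = 1" using s1 by simp
    then have "ent p \<le> 0" unfolding entS SN by simp
    moreover have "0 \<le> (1 - pmf p None) * log 2 (real (card A))"
      using logA pmf_le_1[of p None] by simp
    ultimately show ?thesis by linarith
  next
    case False
    have posT: "\<And>x. x \<in> T \<Longrightarrow> 0 < pmf p x" unfolding T_def S_def by (simp add: pmf_positive)
    have qpos: "0 < q" unfolding q_def using False finT posT by (simp add: sum_pos)
    have "T \<subseteq> Some ` A" unfolding T_def S_def using A by auto
    then have "card T \<le> card (Some ` A)" using A by (intro card_mono) auto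
    then have cardT: "card T \<le> card A" by (simp add: card_image)
    have tT': "(\<Sum>x\<in>T. pmf p x * log 2 (1 / pmf p x)) \<le> q * log 2 (real (card A)) + q * log 2 (1 / q)"
      unfolding q_def by (rule sum_mult_log_inverse_le_card[OF finT False posT cardT])
    show ?thesis
    proof (cases "None \<in> S")
      case True
      have p0: "0 < pmf p None" using True unfolding S_def by (simp add: pmf_positive)
      have bin: "pmf p None * log 2 (1 / pmf p None) + q * log 2 (1 / q) \<le> 1"
        by (rule binary_entropy_le_one[OF p0 qpos p0q])
      have "ent p = pmf p None * log 2 (1 / pmf p None) + (\<Sum>x\<in>T. pmf p x * log 2 (1 / pmf p x))"
        unfolding entS using fin True unfolding T_def S_def by (simp add: sum.remove)
      also have "\<dots> \<le> 1 + q * log 2 (real (card A))" using tT' bin by linarith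
      moreover have "q = 1 - pmf p None" using p0q by simp
      ultimately show ?thesis by simp
    next
      case False
      then have "T = S" "pmf p None = 0" unfolding T_def S_def by (auto simp: set_pmf_eq)
      then have "q = 1" using s1 unfolding q_def by simp
      then show ?thesis using tT' \<open>T = S\<close> \<open>pmf p None = 0\<close> unfolding entS by simp
    qed
  qed
qed

lemma Hrv_pair_le_fano:
  assumes fin: "finite (set_pmf Q)" and A: "finite A" "A \<noteq> {}" and XA: "\<And>w. w \<in> set_pmf Q \<Longrightarrow> X w \<in> A"
  shows "Hrv Q (\<lambda>w. (X w, Y w)) \<le> Hrv Q Y + 1 + measure_pmf.prob Q {w. X w \<noteq> g (Y w)} * log 2 (real (card A))"
proof -
  define Z where "Z = (\<lambda>w. if X w = g (Y w) then None else Some (X w))"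
  have "Hrv Q (\<lambda>w. (X w, Y w)) \<le> Hrv Q (\<lambda>w. (Z w, Y w))"
    by (rule Hrv_le_of_fun[OF fin, where f="\<lambda>(z, y). (case z of None \<Rightarrow> g y | Some x \<Rightarrow> x, y)"])
       (auto simp: Z_def)
  also have "\<dots> \<le> Hrv Q Z + Hrv Q Y" by (rule Hrv_subadditive[OF fin])
  also have "Hrv Q Z \<le> 1 + (1 - pmf (map_pmf Z Q) None) * log 2 (real (card A))"
    unfolding Hrv_def
    by (rule ent_option_le) (use fin A XA in \<open>auto simp: Z_def set_map_pmf\<close>)
  also have "1 - pmf (map_pmf Z Q) None = measure_pmf.prob Q {w. X w \<noteq> g (Y w)}"
  proof -
    have "pmf (map_pmf Z Q) None = measure_pmf.prob Q {w. X w = g (Y w)}"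
      by (simp add: pmf_map Z_def vimage_def)
    moreover have "measure_pmf.prob Q {w. X w \<noteq> g (Y w)} = 1 - measure_pmf.prob Q {w. X w = g (Y w)}"
      using measure_pmf.prob_compl[of "{w. X w = g (Y w)}" Q] by (simp add: Compl_eq_Diff_UNIV[symmetric] Collect_neg_eq[symmetric])
    ultimately show ?thesis by simp
  qed
  finally show ?thesis by simp
qed

section \<open>Entropy of uniform distributions on product sets\<close>

lemma ent_pmf_of_set:
  assumes "finite A" "A \<noteq> {}"
  shows "ent (pmf_of_set A) = log 2 (real (card A))"
proof -
  have "ent (pmf_of_set A) = - (\<Sum>x\<in>A. (1 / real (card A)) * log 2 (1 / real (card A)))"
    unfolding ent_def using assms by (intro arg_cong[where f=uminus] sum.cong) auto
  also have "\<dots> = log 2 (real (card A))"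
    using assms by (simp add: log_divide card_gt_0_iff)
  finally show ?thesis .
qed

lemma ent_pair:
  assumes fp: "finite (set_pmf p)" and fq: "finite (set_pmf q)"
  shows "ent (pair_pmf p q) = ent p + ent q"
proof -
  have sp: "sum (pmf p) (set_pmf p) = 1" using fp by (simp add: sum_pmf_eq_1)
  have sq: "sum (pmf q) (set_pmf q) = 1" using fq by (simp add: sum_pmf_eq_1)
  have "ent (pair_pmf p q) = - (\<Sum>x\<in>set_pmf p \<times> set_pmf q. pmf p (fst x) * pmf q (snd x) *
          (log 2 (pmf p (fst x)) + log 2 (pmf q (snd x))))"
    unfolding ent_def
    by (intro arg_cong[where f=uminus] sum.cong) (auto simp: pmf_pair log_mult pmf_positive)
  also have "\<dots> = - ((\<Sum>a\<in>set_pmf p. \<Sum>b\<in>set_pmf q. pmf p a * pmf q b * log 2 (pmf p a)) +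
                     (\<Sum>a\<in>set_pmf p. \<Sum>b\<in>set_pmf q. pmf p a * pmf q b * log 2 (pmf q b)))"
    by (simp add: sum.cartesian_product split_beta distrib_left sum.distrib)
  also have "(\<Sum>a\<in>set_pmf p. \<Sum>b\<in>set_pmf q. pmf p a * pmf q b * log 2 (pmf p a)) =
       (\<Sum>a\<in>set_pmf p. pmf p a * log 2 (pmf p a))"
    by (simp add: sum_distrib_left[symmetric] sum_distrib_right[symmetric] mult.commute[of "pmf q _"] mult.assoc sq
        flip: sum_distrib_right)
  also have "(\<Sum>a\<in>set_pmf p. \<Sum>b\<in>set_pmf q. pmf p a * pmf q b * log 2 (pmf q b)) =
       (\<Sum>b\<in>set_pmf q. pmf q b * log 2 (pmf q b))"
    by (subst sum.swap) (simp add: mult.assoc sum_distrib_left[symmetric] sp flip: sum_distrib_right)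
  finally show ?thesis unfolding ent_def by simp
qed

lemma Hrv_pair_pmf:
  assumes "finite (set_pmf A)" "finite (set_pmf B)"
  shows "Hrv (pair_pmf A B) (\<lambda>z. (f (fst z), g (snd z))) = Hrv A f + Hrv B g"
proof -
  have "map_pmf (\<lambda>z. (f (fst z), g (snd z))) (pair_pmf A B) = pair_pmf (map_pmf f A) (map_pmf g B)"
    using map_pair[of f g A B] by (simp add: case_prod_beta')
  then show ?thesis unfolding Hrv_def using assms by (simp add: ent_pair)
qed

lemma pair_pmf_of_set:
  assumes "finite A" "A \<noteq> {}" "finite B" "B \<noteq> {}"
  shows "pair_pmf (pmf_of_set A) (pmf_of_set B) = pmf_of_set (A \<times> B)"
proof (rule pmf_eqI)
  fix x :: "'a \<times> 'b"
  obtain a b where x: "x = (a, b)" by (cases x)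
  have "A \<times> B \<noteq> {}" "finite (A \<times> B)" using assms by auto
  then show "pmf (pair_pmf (pmf_of_set A) (pmf_of_set B)) x = pmf (pmf_of_set (A \<times> B)) x"
    unfolding x using assms by (simp add: pmf_pair card_cartesian_product indicator_def)
qed

lemma Hrv_pmf_of_set_Times:
  assumes "finite A" "A \<noteq> {}" "finite B" "B \<noteq> {}"
  shows "Hrv (pmf_of_set (A \<times> B)) (\<lambda>x. (f (fst x), g (snd x))) = Hrv (pmf_of_set A) f + Hrv (pmf_of_set B) g"
  using Hrv_pair_pmf[of "pmf_of_set A" "pmf_of_set B" f g] pair_pmf_of_set[OF assms] assms by simp

lemma Hrv_pmf_of_set_Times_fst:
  assumes "finite A" "A \<noteq> {}" "finite B" "B \<noteq> {}"
  shows "Hrv (pmf_of_set (A \<times> B)) (\<lambda>x. f (fst x)) = Hrv (pmf_of_set A) f"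
proof -
  have "map_pmf (\<lambda>x. f (fst x)) (pmf_of_set (A \<times> B)) = map_pmf f (pmf_of_set A)"
  proof -
    have "map_pmf (\<lambda>x. f (fst x)) (pmf_of_set (A \<times> B)) = map_pmf f (map_pmf fst (pair_pmf (pmf_of_set A) (pmf_of_set B)))"
      by (simp add: map_pmf_comp pair_pmf_of_set[OF assms])
    then show ?thesis by (simp only: map_fst_pair_pmf)
  qed
  then show ?thesis unfolding Hrv_def by simp
qed

lemma Hrv_pmf_of_set_Times_snd:
  assumes "finite A" "A \<noteq> {}" "finite B" "B \<noteq> {}"
  shows "Hrv (pmf_of_set (A \<times> B)) (\<lambda>x. g (snd x)) = Hrv (pmf_of_set B) g"
proof -
  have "map_pmf (\<lambda>x. g (snd x)) (pmf_of_set (A \<times> B)) = map_pmf g (pmf_of_set B)"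
  proof -
    have "map_pmf (\<lambda>x. g (snd x)) (pmf_of_set (A \<times> B)) = map_pmf g (map_pmf snd (pair_pmf (pmf_of_set A) (pmf_of_set B)))"
      by (simp add: map_pmf_comp pair_pmf_of_set[OF assms])
    then show ?thesis by (simp only: map_snd_pair_pmf)
  qed
  then show ?thesis unfolding Hrv_def by simp
qed

lemma PiE_dflt_undefined: "PiE_dflt S undefined A = PiE S A"
  by (auto simp: PiE_dflt_def PiE_def extensional_def)

lemma Hrv_pmf_of_set_PiE_component:
  assumes "finite S" "\<And>s. s \<in> S \<Longrightarrow> finite (A s)" "\<And>s. s \<in> S \<Longrightarrow> A s \<noteq> {}" "s \<in> S"
  shows "Hrv (pmf_of_set (PiE S A)) (\<lambda>w. \<psi> (w s)) = Hrv (pmf_of_set (A s)) \<psi>"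
proof -
  have "pmf_of_set (PiE S A) = Pi_pmf S undefined (\<lambda>s. pmf_of_set (A s))"
    using Pi_pmf_of_set[of S A undefined] assms by (simp add: PiE_dflt_undefined)
  then have "map_pmf (\<lambda>w. w s) (pmf_of_set (PiE S A)) = pmf_of_set (A s)"
    using Pi_pmf_component[of S s undefined "\<lambda>s. pmf_of_set (A s)"] assms by simp
  moreover have "map_pmf (\<lambda>w. \<psi> (w s)) (pmf_of_set (PiE S A)) = map_pmf \<psi> (map_pmf (\<lambda>w. w s) (pmf_of_set (PiE S A)))"
    by (simp add: map_pmf_comp)
  ultimately show ?thesis unfolding Hrv_def by simp
qed

lemma Hrv_Pi_pmf:
  assumes "finite S" "\<And>s. s \<in> S \<Longrightarrow> finite (set_pmf (p s))"
  shows "Hrv (Pi_pmf S dflt p) (\<lambda>w. restrict (\<lambda>s. \<phi> s (w s)) S) = (\<Sum>s\<in>S. Hrv (p s) (\<phi> s))"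
  using assms
proof (induction S rule: finite_induct)
  case empty
  have "(\<lambda>w. restrict (\<lambda>s. \<phi> s (w s)) {}) = (\<lambda>_ _. undefined)" by (simp add: fun_eq_iff)
  then show ?case by (simp add: Hrv_const)
next
  case (insert x F)
  let ?G = "\<lambda>w. restrict (\<lambda>s. \<phi> s (w s)) (insert x F)"
    and ?GF = "\<lambda>w. restrict (\<lambda>s. \<phi> s (w s)) F"
  let ?M = "pair_pmf (p x) (Pi_pmf F dflt p)"
  have finF: "finite (set_pmf (Pi_pmf F dflt p))"
    using insert by (auto simp: set_Pi_pmf)
  have "Hrv (Pi_pmf (insert x F) dflt p) ?G = Hrv ?M (\<lambda>z. ?G ((snd z)(x := fst z)))"
    unfolding Pi_pmf_insert[OF insert.hyps] Hrv_def by (simp add: map_pmf_comp case_prod_beta')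
  also have "\<dots> = Hrv ?M (\<lambda>z. (\<phi> x (fst z), ?GF (snd z)))"
    by (rule Hrv_eq_of_fun[where f="\<lambda>(a, t). t(x := a)" and g="\<lambda>t. (t x, restrict t F)"])
       (use insert.hyps(2) insert.prems finF in \<open>auto simp: fun_eq_iff restrict_def set_pair_pmf\<close>)
  also have "\<dots> = Hrv (p x) (\<phi> x) + Hrv (Pi_pmf F dflt p) ?GF"
    by (rule Hrv_pair_pmf) (use insert.prems finF in auto)
  also have "Hrv (Pi_pmf F dflt p) ?GF = (\<Sum>s\<in>F. Hrv (p s) (\<phi> s))"
    by (rule insert.IH) (use insert.prems in auto)
  finally show ?case using insert.hyps by simp
qed

lemma Hrv_pmf_of_set_PiE:
  assumes "finite S" "\<And>s. s \<in> S \<Longrightarrow> finite (A s)" "\<And>s. s \<in> S \<Longrightarrow> A s \<noteq> {}"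
  shows "Hrv (pmf_of_set (PiE S A)) (\<lambda>w. restrict (\<lambda>s. \<phi> s (w s)) S) = (\<Sum>s\<in>S. Hrv (pmf_of_set (A s)) (\<phi> s))"
  using Hrv_Pi_pmf[of S "\<lambda>s. pmf_of_set (A s)" undefined \<phi>] Pi_pmf_of_set[of S A undefined] assms
  by (simp add: PiE_dflt_undefined)

section \<open>Compressing a key along a sorted enumeration\<close>

definition change_points :: "(nat \<Rightarrow> 'a) \<Rightarrow> nat \<Rightarrow> nat set" where
  "change_points k F = {i. 0 < i \<and> i < F \<and> k (i - 1) \<noteq> k i}"

lemma finite_change_points: "finite (change_points k F)"
  unfolding change_points_def by simp

lemma card_change_points_le:
  fixes k :: "nat \<Rightarrow> 'a::linorder"
  assumes mono: "\<And>i j. i \<le> j \<Longrightarrow> j < F \<Longrightarrow> k i \<le> k j"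
  shows "card (change_points k F) \<le> card (k ` {..<F})"
proof -
  have less: "k i < k j" if "i \<in> change_points k F" "j \<in> change_points k F" "i < j" for i j
  proof -
    have "k i \<le> k (j - 1)" "k (j - 1) \<le> k j" "k (j - 1) \<noteq> k j"
      using that by (auto simp: change_points_def intro!: mono)
    then show ?thesis by simp
  qed
  have "inj_on k (change_points k F)"
    by (rule inj_onI) (metis less less_irrefl linorder_neqE_nat)
  then have "card (change_points k F) = card (k ` change_points k F)" by (simp add: card_image)
  also have "\<dots> \<le> card (k ` {..<F})"
    by (intro card_mono) (auto simp: change_points_def)
  finally show ?thesis .
qed

lemma eq_if_no_change_points_between:
  assumes "\<And>j. i < j \<Longrightarrow> j \<le> i' \<Longrightarrow> j \<notin> change_points k F" and "i \<le> i'" and "i' < F"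
  shows "k i = k i'"
proof -
  have "k i = k j" if "i \<le> j" "j \<le> i'" for j
    using that
  proof (induction j rule: dec_induct)
    case (step j)
    then have "k j = k (Suc j)" using assms(1)[of "Suc j"] assms(3) by (auto simp: change_points_def)
    with step show ?case by simp
  qed simp
  with assms(2) show ?thesis by simp
qed

lemma count_le_eq_imp_no_member_between:
  fixes D :: "nat set"
  assumes "finite D" and "card {l\<in>D. l \<le> i} = card {l\<in>D. l \<le> i'}" and "i < j" "j \<le> i'"
  shows "j \<notin> D"
proof
  assume "j \<in> D"
  with assms(3,4) have "{l\<in>D. l \<le> i} \<subseteq> {l\<in>D. l \<le> i'}" "j \<in> {l\<in>D. l \<le> i'} - {l\<in>D. l \<le> i}"
    by auto
  then have "{l\<in>D. l \<le> i} \<subset> {l\<in>D. l \<le> i'}" by blast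
  then have "card {l\<in>D. l \<le> i} < card {l\<in>D. l \<le> i'}"
    using assms(1) by (intro psubset_card_mono) auto
  with assms(2) show False by simp
qed

lemma card_image_count_le:
  fixes D :: "nat set"
  assumes "finite D"
  shows "card ((\<lambda>i. card {l\<in>D. l \<le> i}) ` A) \<le> card D + 1"
proof -
  have "(\<lambda>i. card {l\<in>D. l \<le> i}) ` A \<subseteq> {..card D}"
    using assms by (auto intro!: card_mono)
  then show ?thesis by (metis card_atMost card_mono finite_atMost Suc_eq_plus1)
qed

lemma exists_sorted_enumeration:
  fixes key :: "'x \<Rightarrow> 'a::linorder"
  assumes "finite A" and "card A = F"
  obtains \<beta> where "bij_betw \<beta> {..<F} A" and "\<And>i j. i \<le> j \<Longrightarrow> j < F \<Longrightarrow> key (\<beta> i) \<le> key (\<beta> j)"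
proof -
  obtain xs where xs: "set xs = A" "distinct xs" using finite_distinct_list[OF assms(1)] by blast
  define ys where "ys = sort_key key xs"
  have ys: "set ys = A" "distinct ys" "sorted (map key ys)" "length ys = F"
    using xs assms(2) distinct_card[of ys] unfolding ys_def by auto
  show ?thesis
  proof
    show "bij_betw (\<lambda>i. ys ! i) {..<F} A" using ys by (metis bij_betw_nth lessThan_atLeast0 atLeast0LessThan)
    show "key (ys ! i) \<le> key (ys ! j)" if "i \<le> j" "j < F" for i j
      using sorted_nth_mono[OF ys(3), of i j] that ys(4) by simp
  qed
qed

lemma exists_sorted_fiber_enumerations:
  fixes key :: "'x \<Rightarrow> 'a::linorder"
  assumes finX: "finite X" and cardF: "\<And>m. m < B \<Longrightarrow> card {x\<in>X. \<mu> x = m} = F"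
  shows "\<exists>\<beta>. \<forall>m<B. bij_betw (\<beta> m) {..<F} {x\<in>X. \<mu> x = m} \<and>
           (\<forall>i j. i \<le> j \<longrightarrow> j < F \<longrightarrow> key (\<beta> m i) \<le> key (\<beta> m j))"
proof -
  have "\<forall>m. \<exists>\<beta>. m < B \<longrightarrow> bij_betw \<beta> {..<F} {x\<in>X. \<mu> x = m} \<and>
          (\<forall>i j. i \<le> j \<longrightarrow> j < F \<longrightarrow> key (\<beta> i) \<le> key (\<beta> j))"
  proof
    fix m
    show "\<exists>\<beta>. m < B \<longrightarrow> bij_betw \<beta> {..<F} {x\<in>X. \<mu> x = m} \<and>
          (\<forall>i j. i \<le> j \<longrightarrow> j < F \<longrightarrow> key (\<beta> i) \<le> key (\<beta> j))"
    proof (cases "m < B")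
      case True
      have fin: "finite {x\<in>X. \<mu> x = m}" using finX by simp
      obtain \<beta> where "bij_betw \<beta> {..<F} {x\<in>X. \<mu> x = m}"
        "\<And>i j. i \<le> j \<Longrightarrow> j < F \<Longrightarrow> key (\<beta> i) \<le> key (\<beta> j)"
        using exists_sorted_enumeration[OF fin cardF[OF True], where key=key] by blast
      then show ?thesis by blast
    qed simp
  qed
  from choice[OF this] obtain \<beta> where \<beta>: "\<forall>m. m < B \<longrightarrow> bij_betw (\<beta> m) {..<F} {x\<in>X. \<mu> x = m} \<and>
          (\<forall>i j. i \<le> j \<longrightarrow> j < F \<longrightarrow> key (\<beta> m i) \<le> key (\<beta> m j))"
    by blast
  then show ?thesis by blast
qed

lemma fiber_enumeration_compression:
  fixes X :: "'x set" and w :: "'x \<Rightarrow> 'v" and \<mu> :: "'x \<Rightarrow> nat" and B F :: nat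
  assumes finX: "finite X" and cardF: "\<And>m. m < B \<Longrightarrow> card {x\<in>X. \<mu> x = m} = F"
  shows "\<exists>\<beta> J g. (\<forall>m<B. bij_betw (\<beta> m) {..<F} {x\<in>X. \<mu> x = m}) \<and>
                (\<forall>m<B. \<forall>i<F. w (\<beta> m i) = g m (J i)) \<and>
                card ((J :: nat \<Rightarrow> nat) ` {..<F}) \<le> B * card (w ` X) + 1"
proof -
  obtain rk :: "'v \<Rightarrow> nat" where rk: "inj_on rk (w ` X)"
    using finite_imp_inj_to_nat_seg[of "w ` X"] finX by blast
  obtain \<beta> where \<beta>: "\<forall>m<B. bij_betw (\<beta> m) {..<F} {x\<in>X. \<mu> x = m} \<and>
      (\<forall>i j. i \<le> j \<longrightarrow> j < F \<longrightarrow> rk (w (\<beta> m i)) \<le> rk (w (\<beta> m j)))"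
    using exists_sorted_fiber_enumerations[OF finX cardF, where key="\<lambda>x. rk (w x)"] by blast
  then have bij: "\<And>m. m < B \<Longrightarrow> bij_betw (\<beta> m) {..<F} {x\<in>X. \<mu> x = m}"
    and sorted: "\<And>m i j. m < B \<Longrightarrow> i \<le> j \<Longrightarrow> j < F \<Longrightarrow> rk (w (\<beta> m i)) \<le> rk (w (\<beta> m j))"
    by blast+
  define D where "D = (\<Union>m<B. change_points (\<lambda>i. rk (w (\<beta> m i))) F)"
  define J where "J i = card {l\<in>D. l \<le> i}" for i
  have finD: "finite D" unfolding D_def by (simp add: finite_change_points)
  have "card D \<le> (\<Sum>m<B. card (change_points (\<lambda>i. rk (w (\<beta> m i))) F))"
    unfolding D_def by (rule card_UN_le) simp
  also have "\<dots> \<le> (\<Sum>m<B. card (w ` X))"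
  proof (rule sum_mono)
    fix m assume m: "m \<in> {..<B}"
    have "card (change_points (\<lambda>i. rk (w (\<beta> m i))) F) \<le> card ((\<lambda>i. rk (w (\<beta> m i))) ` {..<F})"
      by (rule card_change_points_le) (use sorted m in auto)
    also have "\<dots> \<le> card (rk ` w ` X)"
      by (intro card_mono) (use finX bij_betw_apply[OF bij] m in auto)
    also have "\<dots> \<le> card (w ` X)" by (rule card_image_le) (use finX in simp)
    finally show "card (change_points (\<lambda>i. rk (w (\<beta> m i))) F) \<le> card (w ` X)" .
  qed
  finally have cardJ: "card (J ` {..<F}) \<le> B * card (w ` X) + 1"
    using card_image_count_le[OF finD, of "{..<F}"] unfolding J_def by simp
  have ordered: "rk (w (\<beta> m i)) = rk (w (\<beta> m i'))"
    if m: "m < B" and "J i = J i'" "i \<le> i'" "i' < F" for m i i'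
  proof (rule eq_if_no_change_points_between[where k="\<lambda>i. rk (w (\<beta> m i))"])
    fix j assume "i < j" "j \<le> i'"
    with \<open>J i = J i'\<close> have "j \<notin> D"
      unfolding J_def by (rule count_le_eq_imp_no_member_between[OF finD])
    with m show "j \<notin> change_points (\<lambda>i. rk (w (\<beta> m i))) F" unfolding D_def by blast
  qed (use that in auto)
  have wJ: "w (\<beta> m i) = w (\<beta> m i')" if m: "m < B" and "i < F" "i' < F" "J i = J i'" for m i i'
  proof -
    have "rk (w (\<beta> m i)) = rk (w (\<beta> m i'))"
    proof (cases "i \<le> i'")
      case True
      with ordered[OF m] that show ?thesis by blast
    next
      case False
      with ordered[OF m, of i' i] that show ?thesis by simp
    qed
    then show ?thesis using rk bij_betw_apply[OF bij[OF m]] that by (auto dest: inj_onD)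
  qed
  define g where "g m j = w (\<beta> m (SOME i. i < F \<and> J i = j))" for m j
  have "w (\<beta> m i) = g m (J i)" if "m < B" "i < F" for m i
    unfolding g_def by (rule wJ) (use someI[of "\<lambda>i'. i' < F \<and> J i' = J i" i] that in auto)
  with bij cardJ show ?thesis by (intro exI[of _ \<beta>] exI[of _ J] exI[of _ g]) auto
qed

section \<open>Relaxed outer regions and compactness\<close>

lemma compact_PiE_interval_boxes:
  "compact (PiE UNIV (\<lambda>\<gamma>. if P \<gamma> then {0..(R::real)} else {0}) :: ('i \<Rightarrow> real) set)"
proof -
  have "compactin (product_topology (\<lambda>_. euclidean) UNIV) (PiE UNIV (\<lambda>\<gamma>. if P \<gamma> then {0..(R::real)} else {0}))"
    by (subst compactin_PiE) auto
  then show ?thesis by (simp add: euclidean_product_topology)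
qed

lemma compact_Inter_nested_closed:
  fixes Fam :: "real \<Rightarrow> 'a::topological_space set"
  assumes K: "compact K" and cl: "\<And>d. 0 < d \<Longrightarrow> closed (Fam d)"
    and ne: "\<And>d. 0 < d \<Longrightarrow> Fam d \<inter> K \<noteq> {}"
    and mono: "\<And>d d'. 0 < d \<Longrightarrow> d \<le> d' \<Longrightarrow> Fam d \<subseteq> Fam d'"
  shows "\<exists>x\<in>K. \<forall>d>0. x \<in> Fam d"
proof -
  have "K \<inter> \<Inter>(Fam ` {0<..}) \<noteq> {}"
  proof (rule compact_imp_fip[OF K])
    show "\<And>T. T \<in> Fam ` {0<..} \<Longrightarrow> closed T" using cl by auto
  next
    fix F' assume fin: "finite F'" and sub: "F' \<subseteq> Fam ` {0<..}"
    then obtain D where D: "D \<subseteq> {0<..}" "finite D" "F' = Fam ` D"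
      by (metis finite_subset_image)
    show "K \<inter> \<Inter>F' \<noteq> {}"
    proof (cases "D = {}")
      case True
      then show ?thesis using D ne[of 1] by auto
    next
      case False
      define d0 where "d0 = Min D"
      have d0: "d0 \<in> D" "\<And>d. d \<in> D \<Longrightarrow> d0 \<le> d" unfolding d0_def using D False by auto
      have pos: "0 < d0" using d0 D by auto
      have "Fam d0 \<subseteq> Fam d" if "d \<in> D" for d using mono[OF pos d0(2)[OF that]] .
      then have "Fam d0 \<subseteq> \<Inter>F'" using D by auto
      then show ?thesis using ne[OF pos] by auto
    qed
  qed
  then show ?thesis by auto
qed

lemma closed_closed_conv: "closed (closed_conv A)"
  unfolding closed_conv_def by (rule closed_Inter) auto

lemma closed_conv_least: "A \<subseteq> C \<Longrightarrow> closed C \<Longrightarrow> convex_fun C \<Longrightarrow> closed_conv A \<subseteq> C"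
  unfolding closed_conv_def by auto

lemma closed_conv_scaled:
  assumes "x \<in> A" "(\<lambda>i. 0) \<in> A" "0 \<le> u" "u \<le> 1"
  shows "(\<lambda>i. u * x i) \<in> closed_conv A"
  unfolding closed_conv_def
proof
  fix C assume "C \<in> {C. A \<subseteq> C \<and> closed C \<and> convex_fun C}"
  then have C: "A \<subseteq> C" "convex_fun C" by auto
  have xC: "x \<in> C" and zC: "(\<lambda>i. 0) \<in> C" using C(1) assms(1,2) by auto
  have cv: "\<forall>x\<in>C. \<forall>y\<in>C. \<forall>u::real. 0 \<le> u \<and> u \<le> 1 \<longrightarrow> (\<lambda>i. u * x i + (1 - u) * y i) \<in> C"
    using C(2) unfolding convex_fun_def .
  have "(\<lambda>i. u * x i + (1 - u) * (\<lambda>i. 0) i) \<in> C"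
    using spec[OF bspec[OF bspec[OF cv xC] zC], of u] assms(3,4) by simp
  then show "(\<lambda>i. u * x i) \<in> C" by simp
qed

lemma closed_coordinate_eq: "closed {h :: 'i \<Rightarrow> real. h A = c}"
  by (intro closed_Collect_eq continuous_intros continuous_on_product_coordinates)

lemma closed_HN: "closed (HN S E)"
proof -
  have "HN S E = {h. h {} = 0} \<inter> (\<Inter>\<gamma>\<in>{\<gamma>. \<not> \<gamma> \<subseteq> labels S E}. {h. h \<gamma> = 0})"
    unfolding HN_def by auto
  also have "closed \<dots>" by (intro closed_Int closed_INT ballI closed_coordinate_eq)
  finally show ?thesis .
qed

lemma convex_HN: "convex_fun (HN S E)"
  unfolding convex_fun_def HN_def by auto

lemma entropic_HN: "entropic S E \<subseteq> HN S E"
  unfolding entropic_def by auto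

lemma zero_in_entropic_Gammas:
  "(\<lambda>\<gamma>. 0) \<in> entropic S E \<inter> Gamma1 S E \<inter> Gamma2 S E tlv \<inter> Gamma3 V E tlv hdv S T"
proof -
  have HN0: "(\<lambda>\<gamma>. 0) \<in> HN S E" unfolding HN_def by simp
  have "(\<lambda>_. 0) \<in> entropic S E"
    unfolding entropic_def
  proof (intro CollectI conjI HN0 exI[of _ "return_pmf (\<lambda>_. 0)"] allI impI)
    show "finite (set_pmf (return_pmf (\<lambda>_. 0::nat)))" by simp
    fix \<gamma> :: "('v, 'e) lbl set"
    show "0 = ent (map_pmf (\<lambda>u. restrict u \<gamma>) (return_pmf (\<lambda>_. 0::nat)))"
      unfolding ent_def by simp
  qed
  then show ?thesis using HN0 unfolding Gamma1_def Gamma2_def Gamma3_def by simp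
qed

definition entropy_box :: "'v set \<Rightarrow> 'e set \<Rightarrow> real \<Rightarrow> ('v, 'e) hvec set" where
  "entropy_box S E B = PiE UNIV (\<lambda>\<gamma>. if \<gamma> \<subseteq> labels S E then {0..B} else {0})"

lemma compact_entropy_box: "compact (entropy_box S E B)"
  unfolding entropy_box_def by (rule compact_PiE_interval_boxes)

definition relaxed_region ::
  "'v set \<Rightarrow> 'e set \<Rightarrow> ('e \<Rightarrow> 'v) \<Rightarrow> ('e \<Rightarrow> 'v) \<Rightarrow> 'v set \<Rightarrow> 'v set \<Rightarrow>
   ('v \<Rightarrow> 'v set) \<Rightarrow> ('e \<Rightarrow> real) \<Rightarrow> 'e set set \<Rightarrow> ('v \<Rightarrow> real) \<Rightarrow> real \<Rightarrow> ('v, 'e) hvec set" where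
  "relaxed_region V E tlv hdv S T beta c Aw x d =
     closed_conv (entropic S E \<inter> Gamma1 S E \<inter> Gamma2 S E tlv \<inter> Gamma3 V E tlv hdv S T) \<inter>
     {h. \<forall>e\<in>E. h {Edg e} \<le> c e} \<inter>
     {h. \<forall>t\<in>T. h (Edg ` In_edges E hdv t) \<le> h (Msg ` beta t \<union> Edg ` In_edges E hdv t)
            \<and> h (Msg ` beta t \<union> Edg ` In_edges E hdv t) \<le> h (Edg ` In_edges E hdv t) + d} \<inter>
     {h. \<forall>\<alpha>\<in>Aw. h (Msg ` S \<union> Edg ` \<alpha>) \<le> h (Msg ` S) + h (Edg ` \<alpha>)
            \<and> h (Msg ` S) + h (Edg ` \<alpha>) \<le> h (Msg ` S \<union> Edg ` \<alpha>) + d} \<inter>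
     {h. \<forall>s\<in>S. x s - d \<le> h {Msg s}}"

lemma closed_relaxed_region: "closed (relaxed_region V E tlv hdv S T beta c Aw x d)"
  unfolding relaxed_region_def Collect_ball_eq
  by (intro closed_Int closed_INT ballI closed_closed_conv closed_Collect_conj closed_Collect_le
      continuous_intros continuous_on_product_coordinates)

lemma relaxed_region_mono:
  "d \<le> d' \<Longrightarrow> relaxed_region V E tlv hdv S T beta c Aw x d \<subseteq> relaxed_region V E tlv hdv S T beta c Aw x d'"
  unfolding relaxed_region_def by (auto intro: order_trans)

lemma outer_region_if_relaxed:
  assumes x0: "\<forall>v. v \<notin> S \<longrightarrow> x v = 0"
    and h: "\<And>d. 0 < d \<Longrightarrow> h \<in> relaxed_region V E tlv hdv S T beta c Aw x d"
  shows "x \<in> outer_region V E tlv hdv S T beta c Aw"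
proof -
  let ?G = "closed_conv (entropic S E \<inter> Gamma1 S E \<inter> Gamma2 S E tlv \<inter> Gamma3 V E tlv hdv S T)"
  have h1: "h \<in> relaxed_region V E tlv hdv S T beta c Aw x 1" by (rule h) simp
  have hG: "h \<in> ?G" using h1 unfolding relaxed_region_def by blast
  have "?G \<subseteq> HN S E"
    by (rule closed_conv_least) (use entropic_HN closed_HN convex_HN in auto)
  with hG have hHN: "h \<in> HN S E" by blast
  have decodable: "h (Msg ` beta t \<union> Edg ` In_edges E hdv t) = h (Edg ` In_edges E hdv t)"
    if t: "t \<in> T" for t
  proof (rule antisym)
    show "h (Msg ` beta t \<union> Edg ` In_edges E hdv t) \<le> h (Edg ` In_edges E hdv t)"
    proof (rule field_le_epsilon)
      fix d :: real assume "0 < d"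
      then show "h (Msg ` beta t \<union> Edg ` In_edges E hdv t) \<le> h (Edg ` In_edges E hdv t) + d"
        using h[of d] t unfolding relaxed_region_def by auto
    qed
    show "h (Edg ` In_edges E hdv t) \<le> h (Msg ` beta t \<union> Edg ` In_edges E hdv t)"
      using h1 t unfolding relaxed_region_def by auto
  qed
  have secret: "h (Msg ` S \<union> Edg ` \<alpha>) = h (Msg ` S) + h (Edg ` \<alpha>)" if a: "\<alpha> \<in> Aw" for \<alpha>
  proof (rule antisym)
    show "h (Msg ` S \<union> Edg ` \<alpha>) \<le> h (Msg ` S) + h (Edg ` \<alpha>)"
      using h1 a unfolding relaxed_region_def by auto
    show "h (Msg ` S) + h (Edg ` \<alpha>) \<le> h (Msg ` S \<union> Edg ` \<alpha>)"
    proof (rule field_le_epsilon)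
      fix d :: real assume "0 < d"
      then show "h (Msg ` S) + h (Edg ` \<alpha>) \<le> h (Msg ` S \<union> Edg ` \<alpha>) + d"
        using h[of d] a unfolding relaxed_region_def by auto
    qed
  qed
  have rate: "x s \<le> h {Msg s}" if s: "s \<in> S" for s
  proof (rule field_le_epsilon)
    fix d :: real assume "0 < d"
    then show "x s \<le> h {Msg s} + d" using h[of d] s unfolding relaxed_region_def by auto
  qed
  have "h \<in> ?G \<inter> Gamma4 S E hdv T beta \<inter> Gamma5 S E c \<inter> Gamma6 S E Aw"
    using hG hHN decodable secret h1 unfolding Gamma4_def Gamma5_def Gamma6_def relaxed_region_def
    by blast
  with rate show ?thesis
    unfolding outer_region_def Lambda_def using x0
    by (auto intro!: bexI[of _ "ProjS S h"] simp: ProjS_def)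
qed

section \<open>The normalised entropy vector of a code\<close>

definition weakly_secure_code ::
  "'v set \<Rightarrow> 'e set \<Rightarrow> ('e \<Rightarrow> 'v) \<Rightarrow> ('e \<Rightarrow> 'v) \<Rightarrow> 'v set \<Rightarrow> 'v set \<Rightarrow>
   ('v \<Rightarrow> 'v set) \<Rightarrow> ('e \<Rightarrow> real) \<Rightarrow> 'e set set \<Rightarrow> ('v \<Rightarrow> real) \<Rightarrow> real \<Rightarrow> nat \<Rightarrow>
   ('v \<Rightarrow> real) \<Rightarrow> ('v \<Rightarrow> real) \<Rightarrow> ('e \<Rightarrow> nat set) \<Rightarrow>
   ('e \<Rightarrow> ('v \<Rightarrow> nat) \<times> ('v \<Rightarrow> nat) \<Rightarrow> nat) \<Rightarrow> ('v \<Rightarrow> 'v \<Rightarrow> ('e \<Rightarrow> nat) \<Rightarrow> nat) \<Rightarrow> bool" where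
  "weakly_secure_code V E tlv hdv S T beta c Aw r \<epsilon> n rm rk Alph W Dec \<longleftrightarrow>
     is_code V E tlv hdv S T n rm rk Alph W \<and>
     (let P = pmf_of_set (sample_space S n rm rk) in
       (\<forall>s\<in>S. real (nat \<lfloor>real n * rm s\<rfloor>) / real n \<ge> r s - \<epsilon>) \<and>
       (\<forall>e\<in>E. log 2 (real (card (Alph e))) / real n \<le> c e) \<and>
       (\<forall>\<alpha>\<in>Aw. MI P (\<lambda>(m,k). m) (\<lambda>\<omega>. restrict (\<lambda>e. W e \<omega>) \<alpha>) / real n \<le> \<epsilon>) \<and>
       (\<forall>t\<in>T. \<forall>s\<in>beta t.
          measure_pmf.prob P {(m,k). decode_est E hdv Dec W t s (m,k) \<noteq> m s} \<le> \<epsilon>))"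

lemma weak_secrecy_region_iff:
  "r \<in> weak_secrecy_region V E tlv hdv S T beta c Aw \<longleftrightarrow>
     (\<forall>v. v \<notin> S \<longrightarrow> r v = 0) \<and>
     (\<forall>\<epsilon>>0. \<exists>N. \<forall>n\<ge>N. \<exists>rm rk Alph W Dec.
        weakly_secure_code V E tlv hdv S T beta c Aw r \<epsilon> n rm rk Alph W Dec)"
  unfolding weak_secrecy_region_def weakly_secure_code_def by simp

lemma card_div_fiber:
  fixes D N m :: nat
  assumes "0 < D" "m < N"
  shows "card {a \<in> {1..N * D}. (a - 1) div D = m} = D"
proof -
  have eq: "{a \<in> {1..N * D}. (a - 1) div D = m} = (\<lambda>j. m * D + j + 1) ` {..<D}"
  proof (intro equalityI subsetI)
    fix a assume a: "a \<in> {a \<in> {1..N * D}. (a - 1) div D = m}"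
    then have dm: "(a - 1) div D = m" by simp
    have "a - 1 = (a - 1) div D * D + (a - 1) mod D" by (rule div_mult_mod_eq[symmetric])
    then have "a - 1 = m * D + (a - 1) mod D" unfolding dm .
    moreover have "(a - 1) mod D < D" using assms by simp
    ultimately show "a \<in> (\<lambda>j. m * D + j + 1) ` {..<D}" using a
      by (intro image_eqI[of _ _ "(a - 1) mod D"]) auto
  next
    fix a assume "a \<in> (\<lambda>j. m * D + j + 1) ` {..<D}"
    then obtain j where j: "j < D" "a = m * D + j + 1" by auto
    have "m * D + j + 1 \<le> (m + 1) * D" using j by simp
    also have "\<dots> \<le> N * D" using assms by (intro mult_right_mono) auto
    finally have "a \<le> N * D" using j by simp
    moreover have "(a - 1) div D = m" using j by simp
    ultimately show "a \<in> {a \<in> {1..N * D}. (a - 1) div D = m}" using j by simp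
  qed
  have "inj_on (\<lambda>j. m * D + j + 1) {..<D}" by (auto simp: inj_on_def)
  then show ?thesis unfolding eq by (simp add: card_image)
qed

lemma log_prod:
  fixes f :: "'a \<Rightarrow> real"
  assumes "finite F" "\<And>x. x \<in> F \<Longrightarrow> 0 < f x"
  shows "log b (\<Prod>x\<in>F. f x) = (\<Sum>x\<in>F. log b (f x))"
  using assms
proof (induction F rule: finite_induct)
  case (insert x F)
  then have "0 < f x" "0 < (\<Prod>x\<in>F. f x)" by (auto intro: prod_pos)
  then have "log b (f x * (\<Prod>x\<in>F. f x)) = log b (f x) + log b (\<Prod>x\<in>F. f x)"
    by (simp add: log_mult)
  with insert show ?case by simp
qed simp

lemma log2_prod_power: "finite F \<Longrightarrow> log 2 (real (\<Prod>s\<in>F. (2::nat) ^ b s)) = (\<Sum>s\<in>F. real (b s))"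
proof -
  assume F: "finite F"
  have "(\<Prod>s\<in>F. (2::nat) ^ b s) = 2 ^ (\<Sum>s\<in>F. b s)" by (simp add: power_sum)
  then show ?thesis by (simp add: log_nat_power)
qed

lemma log2_le_Suc_log2_mult:
  fixes k a b :: nat
  assumes "0 < k" "k \<le> a * b + 1" "0 < a" "0 < b"
  shows "log 2 (real k) \<le> 1 + log 2 (real a) + log 2 (real b)"
proof -
  have "1 \<le> a * b" using assms by simp
  with assms(2) have "k \<le> 2 * (a * b)" by linarith
  then have "real k \<le> 2 * (real a * real b)" by (metis of_nat_le_iff of_nat_mult of_nat_numeral)
  then have "log 2 (real k) \<le> log 2 (2 * (real a * real b))"
    using assms by (subst log_le_cancel_iff) auto
  also have "\<dots> = 1 + log 2 (real a) + log 2 (real b)"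
    using assms by (simp add: log_mult)
  finally show ?thesis .
qed

lemma bij_betw_restrict_PiE:
  assumes "\<And>s. s \<in> S \<Longrightarrow> bij_betw (\<phi> s) (A s) (B s)"
  shows "bij_betw (\<lambda>w. restrict (\<lambda>s. \<phi> s (w s)) S) (PiE S A) (PiE S B)"
proof (rule bij_betw_byWitness[where f'="\<lambda>v. restrict (\<lambda>s. the_inv_into (A s) (\<phi> s) (v s)) S"])
  have inj: "\<And>s. s \<in> S \<Longrightarrow> inj_on (\<phi> s) (A s)" and img: "\<And>s. s \<in> S \<Longrightarrow> \<phi> s ` A s = B s"
    using assms by (auto simp: bij_betw_def)
  have into: "\<And>s x. s \<in> S \<Longrightarrow> x \<in> A s \<Longrightarrow> \<phi> s x \<in> B s" using assms by (rule bij_betw_apply)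
  show "\<forall>w\<in>PiE S A. restrict (\<lambda>s. the_inv_into (A s) (\<phi> s) (restrict (\<lambda>s. \<phi> s (w s)) S s)) S = w"
    using inj by (auto simp: fun_eq_iff PiE_iff the_inv_into_f_f extensional_def)
  show "\<forall>v\<in>PiE S B. restrict (\<lambda>s. \<phi> s (restrict (\<lambda>s. the_inv_into (A s) (\<phi> s) (v s)) S s)) S = v"
    using inj img by (auto simp: fun_eq_iff PiE_iff f_the_inv_into_f extensional_def)
  show "(\<lambda>w. restrict (\<lambda>s. \<phi> s (w s)) S) ` PiE S A \<subseteq> PiE S B"
    using into by (auto simp: PiE_iff)
  show "(\<lambda>v. restrict (\<lambda>s. the_inv_into (A s) (\<phi> s) (v s)) S) ` PiE S B \<subseteq> PiE S A"
    using inj img by (auto simp: PiE_iff the_inv_into_into)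
qed

lemma bij_betw_PiE_Times:
  "bij_betw (\<lambda>w. (restrict (\<lambda>s. fst (w s)) S, restrict (\<lambda>s. snd (w s)) S))
     (PiE S (\<lambda>s. A s \<times> B s)) (PiE S A \<times> PiE S B)"
  by (rule bij_betw_byWitness[where f'="\<lambda>(m, k). restrict (\<lambda>s. (m s, k s)) S"])
     (auto simp: fun_eq_iff PiE_iff extensional_def mem_Times_iff)

(* Per source: at most n r + 1 bits of message head, at most 1 + (head bits) + (all edge bits)
   of key class; plus all edge bits. *)

definition entropy_box_bound :: "'v set \<Rightarrow> 'e set \<Rightarrow> ('e \<Rightarrow> real) \<Rightarrow> ('v \<Rightarrow> real) \<Rightarrow> real" where
  "entropy_box_bound S E c r = (\<Sum>s\<in>S. 2 * max (r s) 0 + 3 + (\<Sum>e\<in>E. c e)) + (\<Sum>e\<in>E. c e)"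

(* For a source s, a head m < n_heads s and a tail index i < n_tails s determine the message and
   key enum s m i, so the uniform distribution Q on such pairs is carried to the uniform
   distribution P of the code by to_msg_key.  The tail index enters the entropy vector only
   through key_class s i, which together with m determines the symbols sent by s. *)

locale wiretap_code =
  fixes V :: "'v set" and E :: "'e set" and tlv hdv :: "'e \<Rightarrow> 'v" and S T :: "'v set"
    and beta :: "'v \<Rightarrow> 'v set" and c :: "'e \<Rightarrow> real" and Aw :: "'e set set"
    and n :: nat and rm rk :: "'v \<Rightarrow> real" and Alph :: "'e \<Rightarrow> nat set"
    and W :: "'e \<Rightarrow> ('v \<Rightarrow> nat) \<times> ('v \<Rightarrow> nat) \<Rightarrow> nat" and r :: "'v \<Rightarrow> real"
  assumes net: "wiretap_network V E tlv hdv S T beta c Aw"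
    and code: "is_code V E tlv hdv S T n rm rk Alph W"
begin

definition "msg_key_space = sample_space S n rm rk"

definition "P = pmf_of_set msg_key_space"

definition "msg_bits s = nat \<lfloor>real n * rm s\<rfloor>"

definition "key_bits s = nat \<lfloor>real n * rk s\<rfloor>"

definition "head_bits s = min (msg_bits s) (nat \<lceil>real n * r s\<rceil>)"

definition "n_heads s = (2::nat) ^ head_bits s"

definition "n_tails s = (2::nat) ^ (msg_bits s - head_bits s) * 2 ^ key_bits s"

definition "src_space s = idx_set n (rm s) \<times> idx_set n (rk s)"

(* Messages are numbered from 1: the head consists of the leading head_bits binary digits
   of m - 1, written with msg_bits digits. *)
definition "msg_head s m = (m - 1) div 2 ^ (msg_bits s - head_bits s)"

definition "src_enc e = (SOME f. \<forall>(m,k)\<in>msg_key_space. W e (m,k) = f (m (tlv e), k (tlv e)))"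

definition "src_out s x = restrict (\<lambda>e. src_enc e x) (Out_edges E tlv s)"

definition compression :: "'v \<Rightarrow> (nat \<Rightarrow> nat \<Rightarrow> nat \<times> nat) \<Rightarrow> (nat \<Rightarrow> nat) \<Rightarrow> (nat \<Rightarrow> nat \<Rightarrow> ('e \<Rightarrow> nat)) \<Rightarrow> bool" where
  "compression s enum J g \<longleftrightarrow> (\<forall>m<n_heads s. bij_betw (enum m) {..<n_tails s} {x\<in>src_space s. msg_head s (fst x) = m}) \<and>
                (\<forall>m<n_heads s. \<forall>i<n_tails s. src_out s (enum m i) = g m (J i)) \<and>
                card (J ` {..<n_tails s}) \<le> n_heads s * card (src_out s ` src_space s) + 1"

lemma finite_E: "finite E"
  using net unfolding wiretap_network_def by auto

lemma finite_S: "finite S"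
proof -
  have "S \<subseteq> V" "finite V" using net unfolding wiretap_network_def by auto
  then show ?thesis by (rule finite_subset)
qed

lemma src_space_eq: "src_space s = {1..2 ^ msg_bits s} \<times> {1..2 ^ key_bits s}"
  unfolding src_space_def idx_set_def msg_bits_def key_bits_def by simp

lemma finite_src_space: "finite (src_space s)" unfolding src_space_eq by simp

lemma head_bits_le: "head_bits s \<le> msg_bits s" unfolding head_bits_def by simp

lemma card_head_fiber:
  assumes "m < n_heads s"
  shows "card {x\<in>src_space s. msg_head s (fst x) = m} = n_tails s"
proof -
  have "{x\<in>src_space s. msg_head s (fst x) = m} = {a \<in> {1..2 ^ head_bits s * 2 ^ (msg_bits s - head_bits s)}. (a - 1) div 2 ^ (msg_bits s - head_bits s) = m} \<times> {1..2 ^ key_bits s}"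
    unfolding src_space_eq msg_head_def using head_bits_le[of s] by (auto simp flip: power_add)
  moreover have "card {a \<in> {1..2 ^ head_bits s * 2 ^ (msg_bits s - head_bits s)}. (a - 1) div 2 ^ (msg_bits s - head_bits s) = m} = 2 ^ (msg_bits s - head_bits s)"
    by (rule card_div_fiber) (use assms in \<open>auto simp: n_heads_def\<close>)
  ultimately show ?thesis unfolding n_tails_def by (simp add: card_cartesian_product)
qed

lemma compression_exists: "\<exists>enum J g. compression s enum J g"
  unfolding compression_def
  by (rule fiber_enumeration_compression[where X="src_space s" and \<mu>="\<lambda>x. msg_head s (fst x)" and B="n_heads s" and F="n_tails s" and w="src_out s", OF finite_src_space card_head_fiber])

definition "chosen_compression s = (SOME t. compression s (fst t) (fst (snd t)) (snd (snd t)))"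

definition "enum s = fst (chosen_compression s)"

definition "key_class s = fst (snd (chosen_compression s))"

definition "out_of_class s = snd (snd (chosen_compression s))"

lemma compression_chosen: "compression s (enum s) (key_class s) (out_of_class s)"
proof -
  obtain b J g where "compression s b J g" using compression_exists by blast
  then have "compression s (fst (b, J, g)) (fst (snd (b, J, g))) (snd (snd (b, J, g)))" by simp
  then have "compression s (fst (chosen_compression s)) (fst (snd (chosen_compression s))) (snd (snd (chosen_compression s)))"
    unfolding chosen_compression_def by (rule someI)
  then show ?thesis unfolding enum_def key_class_def out_of_class_def .
qed

lemma enum_bij: "m < n_heads s \<Longrightarrow> bij_betw (enum s m) {..<n_tails s} {x\<in>src_space s. msg_head s (fst x) = m}"
  using compression_chosen[of s] unfolding compression_def by blast

lemma src_out_enum: "m < n_heads s \<Longrightarrow> i < n_tails s \<Longrightarrow> src_out s (enum s m i) = out_of_class s m (key_class s i)"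
  using compression_chosen[of s] unfolding compression_def by blast

lemma card_key_class_image: "card (key_class s ` {..<n_tails s}) \<le> n_heads s * card (src_out s ` src_space s) + 1"
  using compression_chosen[of s] unfolding compression_def by blast

lemma enum_in: "m < n_heads s \<Longrightarrow> i < n_tails s \<Longrightarrow> enum s m i \<in> src_space s \<and> msg_head s (fst (enum s m i)) = m"
  using bij_betw_apply[OF enum_bij] by blast

lemma msg_head_less: "x \<in> src_space s \<Longrightarrow> msg_head s (fst x) < n_heads s"
proof -
  assume x: "x \<in> src_space s"
  then have "fst x - 1 < 2 ^ msg_bits s" unfolding src_space_eq by auto
  also have "(2::nat) ^ msg_bits s = 2 ^ head_bits s * 2 ^ (msg_bits s - head_bits s)" using head_bits_le[of s] by (simp flip: power_add)
  finally show ?thesis unfolding msg_head_def n_heads_def by (simp add: div_less_iff_less_mult)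
qed

definition "enum_pair s z = enum s (fst z) (snd z)"

lemma enum_pair_bij: "bij_betw (enum_pair s) ({..<n_heads s} \<times> {..<n_tails s}) (src_space s)"
proof -
  have inj: "inj_on (enum_pair s) ({..<n_heads s} \<times> {..<n_tails s})"
  proof (rule inj_onI)
    fix z z' assume z: "z \<in> {..<n_heads s} \<times> {..<n_tails s}" and z': "z' \<in> {..<n_heads s} \<times> {..<n_tails s}"
      and e: "enum_pair s z = enum_pair s z'"
    have "fst z = fst z'" using enum_in[of "fst z" s "snd z"] enum_in[of "fst z'" s "snd z'"] z z' e
      unfolding enum_pair_def by auto
    moreover have "snd z = snd z'"
      using bij_betw_imp_inj_on[OF enum_bij[of "fst z" s]] z z' e \<open>fst z = fst z'\<close>
      unfolding enum_pair_def by (auto dest: inj_onD)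
    ultimately show "z = z'" by (simp add: prod_eq_iff)
  qed
  have "enum_pair s ` ({..<n_heads s} \<times> {..<n_tails s}) = src_space s"
  proof (intro equalityI subsetI)
    fix x assume "x \<in> enum_pair s ` ({..<n_heads s} \<times> {..<n_tails s})"
    then show "x \<in> src_space s" using enum_in unfolding enum_pair_def by auto
  next
    fix x assume x: "x \<in> src_space s"
    define m where "m = msg_head s (fst x)"
    have m: "m < n_heads s" using msg_head_less[OF x] unfolding m_def .
    have "x \<in> enum s m ` {..<n_tails s}" using enum_bij[OF m] x unfolding bij_betw_def m_def by auto
    then obtain i where "i < n_tails s" "x = enum s m i" by auto
    then show "x \<in> enum_pair s ` ({..<n_heads s} \<times> {..<n_tails s})" using m unfolding enum_pair_def
      by (intro image_eqI[of _ _ "(m, i)"]) auto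
  qed
  with inj show ?thesis unfolding bij_betw_def by simp
qed

definition "head_tail_space = PiE S (\<lambda>s. {..<n_heads s} \<times> {..<n_tails s})"

definition "Q = pmf_of_set head_tail_space"

definition "to_msg_key w = (restrict (\<lambda>s. fst (enum_pair s (w s))) S, restrict (\<lambda>s. snd (enum_pair s (w s))) S)"

lemma n_tails_pos: "0 < n_tails s" unfolding n_tails_def by simp

lemma n_heads_pos: "0 < n_heads s" unfolding n_heads_def by simp

lemma finite_head_tail_space: "finite head_tail_space" unfolding head_tail_space_def using finite_S by (simp add: finite_PiE)

lemma head_tail_space_nonempty: "head_tail_space \<noteq> {}" unfolding head_tail_space_def using n_tails_pos n_heads_pos by (auto simp: PiE_eq_empty_iff)

lemma msg_key_space_eq: "msg_key_space = PiE S (\<lambda>s. idx_set n (rm s)) \<times> PiE S (\<lambda>s. idx_set n (rk s))"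
  unfolding msg_key_space_def sample_space_def ..

lemma to_msg_key_bij: "bij_betw to_msg_key head_tail_space msg_key_space"
proof -
  have "bij_betw (\<lambda>w. restrict (\<lambda>s. enum_pair s (w s)) S) head_tail_space (PiE S src_space)"
    unfolding head_tail_space_def by (rule bij_betw_restrict_PiE) (rule enum_pair_bij)
  moreover have "bij_betw (\<lambda>w. (restrict (\<lambda>s. fst (w s)) S, restrict (\<lambda>s. snd (w s)) S))
      (PiE S src_space) msg_key_space"
    unfolding msg_key_space_eq src_space_def by (rule bij_betw_PiE_Times)
  ultimately have "bij_betw ((\<lambda>w. (restrict (\<lambda>s. fst (w s)) S, restrict (\<lambda>s. snd (w s)) S))
      \<circ> (\<lambda>w. restrict (\<lambda>s. enum_pair s (w s)) S)) head_tail_space msg_key_space"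
    by (rule bij_betw_trans)
  moreover have "(\<lambda>w. (restrict (\<lambda>s. fst (w s)) S, restrict (\<lambda>s. snd (w s)) S))
      \<circ> (\<lambda>w. restrict (\<lambda>s. enum_pair s (w s)) S) = to_msg_key"
    unfolding to_msg_key_def by (auto simp: fun_eq_iff)
  ultimately show ?thesis by simp
qed

lemma map_to_msg_key: "map_pmf to_msg_key Q = P"
  unfolding Q_def P_def using map_pmf_of_set_bij_betw[OF to_msg_key_bij head_tail_space_nonempty finite_head_tail_space] .

lemma set_pmf_Q: "set_pmf Q = head_tail_space" unfolding Q_def using finite_head_tail_space head_tail_space_nonempty by simp

lemma finite_set_pmf_Q: "finite (set_pmf Q)" using set_pmf_Q finite_head_tail_space by simp

lemma to_msg_key_in: "w \<in> head_tail_space \<Longrightarrow> to_msg_key w \<in> msg_key_space"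
  using bij_betw_apply[OF to_msg_key_bij] .

lemma to_msg_key_apply: "w \<in> head_tail_space \<Longrightarrow> s \<in> S \<Longrightarrow> (fst (to_msg_key w) s, snd (to_msg_key w) s) = enum s (fst (w s)) (snd (w s))"
  unfolding to_msg_key_def enum_pair_def by simp

lemma head_tail_space_bounds: "w \<in> head_tail_space \<Longrightarrow> s \<in> S \<Longrightarrow> fst (w s) < n_heads s \<and> snd (w s) < n_tails s"
  unfolding head_tail_space_def by (auto simp: PiE_iff)

lemma msg_head_to_msg_key: "w \<in> head_tail_space \<Longrightarrow> s \<in> S \<Longrightarrow> msg_head s (fst (to_msg_key w) s) = fst (w s)"
  using to_msg_key_apply[of w s] enum_in[of "fst (w s)" s "snd (w s)"] head_tail_space_bounds[of w s] by (metis fst_conv)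

lemma src_enc_eq:
  assumes "s \<in> S" "e \<in> Out_edges E tlv s" "x \<in> msg_key_space"
  shows "W e x = src_enc e (fst x s, snd x s)"
proof -
  have tl: "tlv e = s" using assms unfolding Out_edges_def by simp
  have "\<exists>f. \<forall>(m,k)\<in>msg_key_space. W e (m,k) = f (m s, k s)"
    using code assms unfolding is_code_def msg_key_space_def by blast
  then have ex: "\<exists>f. \<forall>(m,k)\<in>msg_key_space. W e (m,k) = f (m (tlv e), k (tlv e))" by (simp add: tl)
  have "\<forall>(m,k)\<in>msg_key_space. W e (m,k) = src_enc e (m (tlv e), k (tlv e))"
    unfolding src_enc_def by (rule someI_ex[OF ex])
  then show ?thesis using assms tl by (cases x) auto
qed

lemma W_Out_source:
  assumes "w \<in> head_tail_space" "s \<in> S" "e \<in> Out_edges E tlv s"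
  shows "W e (to_msg_key w) = out_of_class s (fst (w s)) (key_class s (snd (w s))) e"
proof -
  have "W e (to_msg_key w) = src_enc e (enum s (fst (w s)) (snd (w s)))"
    using src_enc_eq[OF assms(2,3) to_msg_key_in[OF assms(1)]] to_msg_key_apply[OF assms(1,2)] by simp
  also have "\<dots> = src_out s (enum s (fst (w s)) (snd (w s))) e" unfolding src_out_def using assms(3) by simp
  also have "\<dots> = out_of_class s (fst (w s)) (key_class s (snd (w s))) e" using src_out_enum head_tail_space_bounds[OF assms(1,2)] by simp
  finally show ?thesis .
qed

lemma W_Out_inner:
  assumes "v \<in> V - (S \<union> T)" "e \<in> Out_edges E tlv v"
  obtains f where "\<And>w. w \<in> head_tail_space \<Longrightarrow> W e (to_msg_key w) = f (restrict (\<lambda>e'. W e' (to_msg_key w)) (In_edges E hdv v))"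
proof -
  obtain f where "\<forall>x\<in>msg_key_space. W e x = f (restrict (\<lambda>e'. W e' x) (In_edges E hdv v))"
    using code assms unfolding is_code_def msg_key_space_def by blast
  then show ?thesis using that to_msg_key_in by blast
qed

definition "rv w l = (case l of Msg s \<Rightarrow> fst (w s) | Key s \<Rightarrow> key_class s (snd (w s)) | Edg e \<Rightarrow> W e (to_msg_key w))"

definition "L = labels S E"

definition "hvec \<gamma> = (if \<gamma> \<subseteq> L then Hrv Q (\<lambda>w. restrict (rv w) \<gamma>) else 0)"

lemma Hrv_Q_eq_of_fun:
  assumes "\<And>w. w \<in> head_tail_space \<Longrightarrow> X w = f (Y w)" "\<And>w. w \<in> head_tail_space \<Longrightarrow> Y w = g (X w)"
  shows "Hrv Q X = Hrv Q Y"
  by (rule Hrv_eq_of_fun[OF finite_set_pmf_Q]) (use assms set_pmf_Q in auto)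

lemma Hrv_Q_le_of_fun:
  assumes "\<And>w. w \<in> head_tail_space \<Longrightarrow> X w = f (Y w)"
  shows "Hrv Q X \<le> Hrv Q Y"
  by (rule Hrv_le_of_fun[OF finite_set_pmf_Q]) (use assms set_pmf_Q in auto)

lemma finite_labels: "finite L" unfolding L_def labels_def using finite_S finite_E by simp

lemma hvec_HN: "hvec \<in> HN S E"
proof -
  have "hvec {} = 0"
  proof -
    have "(\<lambda>w. restrict (rv w) {}) = (\<lambda>w. (\<lambda>_. undefined))" by (simp add: fun_eq_iff)
    then show ?thesis unfolding hvec_def by (simp add: Hrv_const)
  qed
  then show ?thesis unfolding HN_def hvec_def L_def by auto
qed

lemma hvec_entropic: "hvec \<in> entropic S E"
proof -
  have "finite (set_pmf (map_pmf rv Q))" using finite_set_pmf_Q by simp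
  moreover have "hvec \<gamma> = ent (map_pmf (\<lambda>u. restrict u \<gamma>) (map_pmf rv Q))" if "\<gamma> \<subseteq> labels S E" for \<gamma>
    using that unfolding hvec_def L_def Hrv_def by (simp add: map_pmf_comp)
  ultimately show ?thesis unfolding entropic_def using hvec_HN by blast
qed

lemma Q_eq_pmf_of_set_PiE: "Q = pmf_of_set (PiE S (\<lambda>s. {..<n_heads s} \<times> {..<n_tails s}))"
  unfolding Q_def head_tail_space_def ..

lemma hvec_Msg_eq_Hrv: "s \<in> S \<Longrightarrow> hvec {Msg s} = Hrv (pmf_of_set {..<n_heads s}) (\<lambda>x. x)"
proof -
  assume s: "s \<in> S"
  have "hvec {Msg s} = Hrv Q (\<lambda>w. restrict (rv w) {Msg s})"
    unfolding hvec_def L_def labels_def using s by simp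
  also have "\<dots> = Hrv Q (\<lambda>w. fst (w s))"
    by (rule Hrv_Q_eq_of_fun[where f="\<lambda>x. (\<lambda>l. if l = Msg s then x else undefined)" and g="\<lambda>u. u (Msg s)"])
       (auto simp: rv_def fun_eq_iff)
  also have "\<dots> = Hrv (pmf_of_set ({..<n_heads s} \<times> {..<n_tails s})) fst"
    unfolding Q_eq_pmf_of_set_PiE by (rule Hrv_pmf_of_set_PiE_component[where \<psi>=fst]) (use finite_S s n_heads_pos n_tails_pos in auto)
  also have "\<dots> = Hrv (pmf_of_set {..<n_heads s}) (\<lambda>x. x)"
    using Hrv_pmf_of_set_Times_fst[of "{..<n_heads s}" "{..<n_tails s}" "\<lambda>x. x"] n_heads_pos n_tails_pos by auto
  finally show ?thesis .
qed

lemma hvec_Key_eq_Hrv: "s \<in> S \<Longrightarrow> hvec {Key s} = Hrv (pmf_of_set {..<n_tails s}) (key_class s)"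
proof -
  assume s: "s \<in> S"
  have "hvec {Key s} = Hrv Q (\<lambda>w. restrict (rv w) {Key s})"
    unfolding hvec_def L_def labels_def using s by simp
  also have "\<dots> = Hrv Q (\<lambda>w. key_class s (snd (w s)))"
    by (rule Hrv_Q_eq_of_fun[where f="\<lambda>x. (\<lambda>l. if l = Key s then x else undefined)" and g="\<lambda>u. u (Key s)"])
       (auto simp: rv_def fun_eq_iff)
  also have "\<dots> = Hrv (pmf_of_set ({..<n_heads s} \<times> {..<n_tails s})) (\<lambda>z. key_class s (snd z))"
    unfolding Q_eq_pmf_of_set_PiE by (rule Hrv_pmf_of_set_PiE_component[where \<psi>="\<lambda>z. key_class s (snd z)"]) (use finite_S s n_heads_pos n_tails_pos in auto)
  also have "\<dots> = Hrv (pmf_of_set {..<n_tails s}) (key_class s)"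
    using Hrv_pmf_of_set_Times_snd[of "{..<n_heads s}" "{..<n_tails s}" "key_class s"] n_heads_pos n_tails_pos by auto
  finally show ?thesis .
qed

lemma hvec_Gamma1: "hvec \<in> Gamma1 S E"
proof -
  have sub: "Msg ` S \<union> Key ` S \<subseteq> L" unfolding L_def labels_def by auto
  have "hvec (Msg ` S \<union> Key ` S) = Hrv Q (\<lambda>w. restrict (rv w) (Msg ` S \<union> Key ` S))"
    unfolding hvec_def using sub by simp
  also have "\<dots> = Hrv Q (\<lambda>w. restrict (\<lambda>s. (fst (w s), key_class s (snd (w s)))) S)"
    by (rule Hrv_Q_eq_of_fun[where f="\<lambda>t. restrict (\<lambda>l. case l of Msg s \<Rightarrow> fst (t s) | Key s \<Rightarrow> snd (t s) | Edg e \<Rightarrow> 0) (Msg ` S \<union> Key ` S)"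
          and g="\<lambda>u. restrict (\<lambda>s. (u (Msg s), u (Key s))) S"])
       (auto simp: rv_def fun_eq_iff restrict_def split: lbl.split)
  also have "\<dots> = (\<Sum>s\<in>S. Hrv (pmf_of_set ({..<n_heads s} \<times> {..<n_tails s})) (\<lambda>z. (fst z, key_class s (snd z))))"
    unfolding Q_eq_pmf_of_set_PiE by (rule Hrv_pmf_of_set_PiE[where \<phi>="\<lambda>s z. (fst z, key_class s (snd z))"]) (use finite_S n_heads_pos n_tails_pos in auto)
  also have "\<dots> = (\<Sum>s\<in>S. hvec {Msg s} + hvec {Key s})"
  proof (rule sum.cong[OF refl])
    fix s assume s: "s \<in> S"
    show "Hrv (pmf_of_set ({..<n_heads s} \<times> {..<n_tails s})) (\<lambda>z. (fst z, key_class s (snd z))) = hvec {Msg s} + hvec {Key s}"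
      using Hrv_pmf_of_set_Times[of "{..<n_heads s}" "{..<n_tails s}" "\<lambda>x. x" "key_class s"] n_heads_pos n_tails_pos hvec_Msg_eq_Hrv[OF s] hvec_Key_eq_Hrv[OF s]
      by auto
  qed
  finally show ?thesis unfolding Gamma1_def using hvec_HN by blast
qed

lemma Out_edges_subset: "Out_edges E tlv s \<subseteq> E" unfolding Out_edges_def by auto

lemma In_edges_subset: "In_edges E hdv s \<subseteq> E" unfolding In_edges_def by auto

lemma hvec_Gamma2: "hvec \<in> Gamma2 S E tlv"
proof -
  have "hvec ({Msg s, Key s} \<union> Edg ` Out_edges E tlv s) = hvec {Msg s, Key s}" if s: "s \<in> S" for s
  proof -
    let ?B = "{Msg s, Key s} \<union> Edg ` Out_edges E tlv s"
    have sub: "?B \<subseteq> L" "{Msg s, Key s} \<subseteq> L" unfolding L_def labels_def using s Out_edges_subset by auto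
    have "Hrv Q (\<lambda>w. restrict (rv w) ?B) = Hrv Q (\<lambda>w. restrict (rv w) {Msg s, Key s})"
    proof (rule Hrv_Q_eq_of_fun[where f="\<lambda>u. restrict (\<lambda>l. case l of Edg e \<Rightarrow> out_of_class s (u (Msg s)) (u (Key s)) e | _ \<Rightarrow> u l) ?B"
          and g="\<lambda>u. restrict u {Msg s, Key s}"])
      fix w assume w: "w \<in> head_tail_space"
      show "restrict (rv w) ?B = restrict (\<lambda>l. case l of Edg e \<Rightarrow> out_of_class s (restrict (rv w) {Msg s, Key s} (Msg s)) (restrict (rv w) {Msg s, Key s} (Key s)) e | _ \<Rightarrow> restrict (rv w) {Msg s, Key s} l) ?B"
        using W_Out_source[OF w s] by (auto simp: fun_eq_iff rv_def restrict_def split: lbl.split)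
      show "restrict (rv w) {Msg s, Key s} = restrict (restrict (rv w) ?B) {Msg s, Key s}"
        by (auto simp: fun_eq_iff restrict_def)
    qed
    then show ?thesis unfolding hvec_def using sub by simp
  qed
  then show ?thesis unfolding Gamma2_def using hvec_HN by blast
qed

definition "inner_enc v e = (SOME f. \<forall>w\<in>head_tail_space. W e (to_msg_key w) = f (restrict (\<lambda>e'. W e' (to_msg_key w)) (In_edges E hdv v)))"

lemma inner_enc_eq:
  assumes "v \<in> V - (S \<union> T)" "e \<in> Out_edges E tlv v" "w \<in> head_tail_space"
  shows "W e (to_msg_key w) = inner_enc v e (restrict (\<lambda>e'. W e' (to_msg_key w)) (In_edges E hdv v))"
proof -
  obtain f where "\<And>w. w \<in> head_tail_space \<Longrightarrow> W e (to_msg_key w) = f (restrict (\<lambda>e'. W e' (to_msg_key w)) (In_edges E hdv v))"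
    using W_Out_inner[OF assms(1,2)] by blast
  then have ex: "\<exists>f. \<forall>w\<in>head_tail_space. W e (to_msg_key w) = f (restrict (\<lambda>e'. W e' (to_msg_key w)) (In_edges E hdv v))" by blast
  show ?thesis using someI_ex[OF ex] assms(3) unfolding inner_enc_def by blast
qed

lemma hvec_Gamma3: "hvec \<in> Gamma3 V E tlv hdv S T"
proof -
  have "hvec (Edg ` (In_edges E hdv v \<union> Out_edges E tlv v)) = hvec (Edg ` In_edges E hdv v)"
    if v: "v \<in> V - (S \<union> T)" for v
  proof -
    let ?I = "In_edges E hdv v" and ?O = "Out_edges E tlv v"
    let ?B = "Edg ` (?I \<union> ?O)"
    have IO: "?I \<union> ?O \<subseteq> E" using In_edges_subset[of v] Out_edges_subset[of v] by simp
    have e1: "?B \<subseteq> Edg ` E" using IO by (intro image_mono) simp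
    have e2: "Edg ` ?I \<subseteq> Edg ` E" using IO by (intro image_mono) simp
    have sub: "?B \<subseteq> L" "Edg ` ?I \<subseteq> L" unfolding L_def labels_def using e1 e2 by auto
    have "Hrv Q (\<lambda>w. restrict (rv w) ?B) = Hrv Q (\<lambda>w. restrict (rv w) (Edg ` ?I))"
    proof (rule Hrv_Q_eq_of_fun[where f="\<lambda>u. restrict (\<lambda>l. case l of Edg e \<Rightarrow> (if e \<in> ?I then u l else inner_enc v e (restrict (\<lambda>e'. u (Edg e')) ?I)) | _ \<Rightarrow> 0) ?B"
          and g="\<lambda>u. restrict u (Edg ` ?I)"])
      fix w assume w: "w \<in> head_tail_space"
      have r: "restrict (\<lambda>e'. restrict (rv w) (Edg ` ?I) (Edg e')) ?I = restrict (\<lambda>e'. W e' (to_msg_key w)) ?I"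
        by (auto simp: fun_eq_iff rv_def restrict_def)
      show "restrict (rv w) ?B = restrict (\<lambda>l. case l of Edg e \<Rightarrow> (if e \<in> ?I then restrict (rv w) (Edg ` ?I) l else inner_enc v e (restrict (\<lambda>e'. restrict (rv w) (Edg ` ?I) (Edg e')) ?I)) | _ \<Rightarrow> 0) ?B"
        unfolding r using inner_enc_eq[OF v _ w] by (auto simp: fun_eq_iff rv_def restrict_def split: lbl.split)
      show "restrict (rv w) (Edg ` ?I) = restrict (restrict (rv w) ?B) (Edg ` ?I)"
        by (auto simp: fun_eq_iff restrict_def)
    qed
    then show ?thesis unfolding hvec_def using sub by simp
  qed
  then show ?thesis unfolding Gamma3_def using hvec_HN by blast
qed

lemma W_in_Alph: "w \<in> head_tail_space \<Longrightarrow> e \<in> E \<Longrightarrow> W e (to_msg_key w) \<in> Alph e"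
  using code to_msg_key_in unfolding is_code_def msg_key_space_def by blast

lemma finite_Alph: "e \<in> E \<Longrightarrow> finite (Alph e)"
  using code unfolding is_code_def by blast

lemma hvec_Edg_le: "e \<in> E \<Longrightarrow> hvec {Edg e} \<le> log 2 (real (card (Alph e)))"
proof -
  assume e: "e \<in> E"
  have "hvec {Edg e} = Hrv Q (\<lambda>w. restrict (rv w) {Edg e})"
    unfolding hvec_def L_def labels_def using e by simp
  also have "\<dots> = Hrv Q (\<lambda>w. W e (to_msg_key w))"
    by (rule Hrv_Q_eq_of_fun[where f="\<lambda>x. (\<lambda>l. if l = Edg e then x else undefined)" and g="\<lambda>u. u (Edg e)"])
       (auto simp: rv_def fun_eq_iff)
  also have "\<dots> \<le> log 2 (real (card (Alph e)))"
    by (rule Hrv_le_log_card[OF finite_Alph[OF e]]) (use W_in_Alph e set_pmf_Q in auto)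
  finally show ?thesis .
qed

lemma Hrv_Q_cong: "(\<And>w. w \<in> head_tail_space \<Longrightarrow> X w = Y w) \<Longrightarrow> Hrv Q X = Hrv Q Y"
  by (rule Hrv_cong) (use set_pmf_Q in auto)

lemma Hrv_P_eq_Hrv_Q: "Hrv P Z = Hrv Q (\<lambda>w. Z (to_msg_key w))"
  unfolding Hrv_def map_to_msg_key[symmetric] by (simp add: map_pmf_comp)

lemma hvec_Msg: "s \<in> S \<Longrightarrow> hvec {Msg s} = real (head_bits s)"
proof -
  assume s: "s \<in> S"
  have "Hrv (pmf_of_set {..<n_heads s}) (\<lambda>x. x) = ent (pmf_of_set {..<n_heads s})"
    unfolding Hrv_def by simp
  also have "\<dots> = log 2 (real (card {..<n_heads s}))" by (rule ent_pmf_of_set) (use n_heads_pos in auto)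
  also have "\<dots> = real (head_bits s)" unfolding n_heads_def by (simp add: log_nat_power)
  finally show ?thesis using hvec_Msg_eq_Hrv[OF s] by simp
qed

lemma beta_subset: "t \<in> T \<Longrightarrow> beta t \<subseteq> S"
  using net unfolding wiretap_network_def by blast

lemma Aw_subset: "\<alpha> \<in> Aw \<Longrightarrow> \<alpha> \<subseteq> E"
  using net unfolding wiretap_network_def by blast

lemma hvec_Gamma4_lower:
  assumes t: "t \<in> T"
  shows "hvec (Edg ` In_edges E hdv t) \<le> hvec (Msg ` beta t \<union> Edg ` In_edges E hdv t)"
proof -
  let ?M = "Msg ` beta t" and ?I = "Edg ` In_edges E hdv t"
  have sub: "?M \<union> ?I \<subseteq> L" "?I \<subseteq> L"
    unfolding L_def labels_def using beta_subset[OF t] In_edges_subset[of t] by blast+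
  have "Hrv Q (\<lambda>w. restrict (rv w) ?I) \<le> Hrv Q (\<lambda>w. restrict (rv w) (?M \<union> ?I))"
    by (rule Hrv_Q_le_of_fun[where f="\<lambda>u. restrict u ?I"]) (auto simp: fun_eq_iff restrict_def)
  then show ?thesis unfolding hvec_def using sub by simp
qed

lemma prob_head_decoding_error_le:
  assumes t: "t \<in> T" and eps: "0 \<le> \<epsilon>"
    and dec: "\<forall>s\<in>beta t. measure_pmf.prob P {(m,k). decode_est E hdv Dec W t s (m,k) \<noteq> m s} \<le> \<epsilon>"
  shows "measure_pmf.prob Q {w. \<exists>s\<in>beta t.
           fst (w s) \<noteq> msg_head s (Dec t s (restrict (\<lambda>e. W e (to_msg_key w)) (In_edges E hdv t)))}
         \<le> real (card S) * \<epsilon>"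
proof -
  have bS: "beta t \<subseteq> S" using beta_subset[OF t] .
  have finb: "finite (beta t)" using finite_S bS finite_subset by blast
  define D where "D s = {(m,k). decode_est E hdv Dec W t s (m,k) \<noteq> m s}" for s
  have "{w. \<exists>s\<in>beta t. fst (w s) \<noteq> msg_head s (Dec t s (restrict (\<lambda>e. W e (to_msg_key w)) (In_edges E hdv t)))}
        \<inter> set_pmf Q \<subseteq> (\<Union>s\<in>beta t. to_msg_key -` D s)"
    using msg_head_to_msg_key bS
    by (fastforce simp: set_pmf_Q D_def decode_est_def split: prod.split)
  then have "measure_pmf.prob Q {w. \<exists>s\<in>beta t.
           fst (w s) \<noteq> msg_head s (Dec t s (restrict (\<lambda>e. W e (to_msg_key w)) (In_edges E hdv t)))}
         \<le> measure_pmf.prob Q (\<Union>s\<in>beta t. to_msg_key -` D s)"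
    by (subst measure_Int_set_pmf[symmetric]) (rule measure_pmf.finite_measure_mono, auto)
  also have "\<dots> \<le> (\<Sum>s\<in>beta t. measure_pmf.prob Q (to_msg_key -` D s))"
    by (rule measure_pmf.finite_measure_subadditive_finite[OF finb]) simp
  also have "\<dots> = (\<Sum>s\<in>beta t. measure_pmf.prob P (D s))"
    by (simp add: map_to_msg_key[symmetric])
  also have "\<dots> \<le> (\<Sum>s\<in>beta t. \<epsilon>)"
    by (rule sum_mono) (use dec in \<open>simp add: D_def\<close>)
  also have "\<dots> \<le> real (card S) * \<epsilon>"
    using card_mono[OF finite_S bS] eps by (simp add: mult_right_mono)
  finally show ?thesis .
qed

lemma hvec_Gamma4_fano:
  assumes t: "t \<in> T" and eps: "0 \<le> \<epsilon>"
    and dec: "\<forall>s\<in>beta t. measure_pmf.prob P {(m,k). decode_est E hdv Dec W t s (m,k) \<noteq> m s} \<le> \<epsilon>"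
  shows "hvec (Msg ` beta t \<union> Edg ` In_edges E hdv t) \<le> hvec (Edg ` In_edges E hdv t) + 1 + (real (card S) * \<epsilon>) * (\<Sum>s\<in>S. real (head_bits s))"
proof -
  let ?M = "Msg ` beta t" and ?In = "In_edges E hdv t"
  let ?I = "Edg ` ?In"
  have bS: "beta t \<subseteq> S" using beta_subset[OF t] .
  have finb: "finite (beta t)" using finite_S bS finite_subset by blast
  have sub: "?M \<union> ?I \<subseteq> L" "?I \<subseteq> L"
    unfolding L_def labels_def using bS In_edges_subset[of t] by blast+
  define X where "X w = restrict (rv w) ?M" for w
  define Y where "Y w = restrict (rv w) ?I" for w
  define g where "g (y :: ('v, 'e) lbl \<Rightarrow> nat) = restrict (\<lambda>l :: ('v, 'e) lbl. case l of Msg s \<Rightarrow> msg_head s (Dec t s (restrict (\<lambda>e. y (Edg e)) ?In)) | _ \<Rightarrow> 0) ?M" for y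
  define A where "A = (PiE ?M (\<lambda>l. case l of Msg s \<Rightarrow> {..<n_heads s} | _ \<Rightarrow> {0}) :: (('v, 'e) lbl \<Rightarrow> nat) set)"
  have finA: "finite A" unfolding A_def using finb by (intro finite_PiE) (auto split: lbl.split)
  have neA: "A \<noteq> {}" unfolding A_def using n_heads_pos by (auto simp: PiE_eq_empty_iff split: lbl.split)
  have XA: "X w \<in> A" if "w \<in> set_pmf Q" for w
  proof -
    have w: "w \<in> head_tail_space" using that set_pmf_Q by simp
    show ?thesis unfolding X_def A_def using head_tail_space_bounds[OF w] bS by (auto simp: rv_def)
  qed
  have cardA: "log 2 (real (card A)) = (\<Sum>s\<in>beta t. real (head_bits s))"
  proof -
    have "card A = (\<Prod>l\<in>?M. card (case (l :: ('v, 'e) lbl) of Msg s \<Rightarrow> {..<n_heads s} | _ \<Rightarrow> {0::nat}))"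
      unfolding A_def using finb by (simp add: card_PiE)
    also have "\<dots> = (\<Prod>s\<in>beta t. n_heads s)"
      by (subst prod.reindex) (auto simp: inj_on_def)
    finally show ?thesis unfolding n_heads_def using log2_prod_power[OF finb, of head_bits] by simp
  qed
  have eq1: "hvec (?M \<union> ?I) = Hrv Q (\<lambda>w. (X w, Y w))"
  proof -
    have "Hrv Q (\<lambda>w. restrict (rv w) (?M \<union> ?I)) = Hrv Q (\<lambda>w. (X w, Y w))"
      by (rule Hrv_Q_eq_of_fun[where f="\<lambda>(x, y). restrict (\<lambda>l. if l \<in> ?M then x l else y l) (?M \<union> ?I)"
            and g="\<lambda>u. (restrict u ?M, restrict u ?I)"])
         (auto simp: X_def Y_def fun_eq_iff restrict_def)
    then show ?thesis unfolding hvec_def using sub by simp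
  qed
  have eq2: "hvec ?I = Hrv Q Y" unfolding hvec_def Y_def using sub by simp
  have fano: "Hrv Q (\<lambda>w. (X w, Y w)) \<le> Hrv Q Y + 1 + measure_pmf.prob Q {w. X w \<noteq> g (Y w)} * log 2 (real (card A))"
    by (rule Hrv_pair_le_fano[OF finite_set_pmf_Q finA neA XA])
  have "{w. X w \<noteq> g (Y w)} \<inter> set_pmf Q \<subseteq> {w. \<exists>s\<in>beta t.
          fst (w s) \<noteq> msg_head s (Dec t s (restrict (\<lambda>e. W e (to_msg_key w)) ?In))}"
  proof
    fix w assume "w \<in> {w. X w \<noteq> g (Y w)} \<inter> set_pmf Q"
    then obtain l where l: "X w l \<noteq> g (Y w) l" by (auto simp: fun_eq_iff)
    then obtain s where s: "s \<in> beta t" "l = Msg s"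
      unfolding X_def g_def by (auto simp: restrict_def split: if_splits)
    have "restrict (\<lambda>e. Y w (Edg e)) ?In = restrict (\<lambda>e. W e (to_msg_key w)) ?In"
      unfolding Y_def by (auto simp: fun_eq_iff restrict_def rv_def)
    with l s show "w \<in> {w. \<exists>s\<in>beta t.
          fst (w s) \<noteq> msg_head s (Dec t s (restrict (\<lambda>e. W e (to_msg_key w)) ?In))}"
      unfolding X_def g_def by (auto simp: rv_def)
  qed
  then have "measure_pmf.prob Q {w. X w \<noteq> g (Y w)} \<le> measure_pmf.prob Q {w. \<exists>s\<in>beta t.
          fst (w s) \<noteq> msg_head s (Dec t s (restrict (\<lambda>e. W e (to_msg_key w)) ?In))}"
    by (subst measure_Int_set_pmf[symmetric]) (rule measure_pmf.finite_measure_mono, auto)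
  also have "\<dots> \<le> real (card S) * \<epsilon>" by (rule prob_head_decoding_error_le[OF t eps dec])
  finally have pb: "measure_pmf.prob Q {w. X w \<noteq> g (Y w)} \<le> real (card S) * \<epsilon>" .
  have sb: "(\<Sum>s\<in>beta t. real (head_bits s)) \<le> (\<Sum>s\<in>S. real (head_bits s))"
    by (rule sum_mono2[OF finite_S bS]) simp
  have "measure_pmf.prob Q {w. X w \<noteq> g (Y w)} * log 2 (real (card A)) \<le> (real (card S) * \<epsilon>) * (\<Sum>s\<in>S. real (head_bits s))"
    unfolding cardA using eps by (intro mult_mono pb sb) (auto intro: sum_nonneg)
  then show ?thesis using fano eq1 eq2 by linarith
qed

lemma hvec_Gamma6:
  assumes a: "\<alpha> \<in> Aw"
  shows "hvec (Msg ` S \<union> Edg ` \<alpha>) \<le> hvec (Msg ` S) + hvec (Edg ` \<alpha>)"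
    and "hvec (Msg ` S) + hvec (Edg ` \<alpha>) - hvec (Msg ` S \<union> Edg ` \<alpha>) \<le> MI P (\<lambda>(m,k). m) (\<lambda>\<omega>. restrict (\<lambda>e. W e \<omega>) \<alpha>)"
proof -
  have aE: "\<alpha> \<subseteq> E" using Aw_subset[OF a] .
  have sub: "Msg ` S \<union> Edg ` \<alpha> \<subseteq> L" "Msg ` S \<subseteq> L" "Edg ` \<alpha> \<subseteq> L"
    unfolding L_def labels_def using aE by blast+
  define Fh where "Fh mt = restrict (\<lambda>l :: ('v, 'e) lbl. case l of Msg s \<Rightarrow> msg_head s (mt s) | _ \<Rightarrow> 0) (Msg ` S)" for mt :: "'v \<Rightarrow> nat"
  define Ya where "Ya \<omega> = restrict (\<lambda>e. W e \<omega>) \<alpha>" for \<omega>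
  have e1: "hvec (Msg ` S) = Hrv Q (\<lambda>w. Fh (fst (to_msg_key w)))"
  proof -
    have "Hrv Q (\<lambda>w. restrict (rv w) (Msg ` S)) = Hrv Q (\<lambda>w. Fh (fst (to_msg_key w)))"
      by (rule Hrv_Q_cong) (auto simp: Fh_def rv_def fun_eq_iff restrict_def msg_head_to_msg_key)
    then show ?thesis unfolding hvec_def using sub by simp
  qed
  have e2: "hvec (Edg ` \<alpha>) = Hrv Q (\<lambda>w. Ya (to_msg_key w))"
  proof -
    have "Hrv Q (\<lambda>w. restrict (rv w) (Edg ` \<alpha>)) = Hrv Q (\<lambda>w. Ya (to_msg_key w))"
      by (rule Hrv_Q_eq_of_fun[where f="\<lambda>y. restrict (\<lambda>l. case l of Edg e \<Rightarrow> y e | _ \<Rightarrow> 0) (Edg ` \<alpha>)"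
            and g="\<lambda>u. restrict (\<lambda>e. u (Edg e)) \<alpha>"])
         (auto simp: Ya_def rv_def fun_eq_iff restrict_def)
    then show ?thesis unfolding hvec_def using sub by simp
  qed
  have e3: "hvec (Msg ` S \<union> Edg ` \<alpha>) = Hrv Q (\<lambda>w. (Fh (fst (to_msg_key w)), Ya (to_msg_key w)))"
  proof -
    have "Hrv Q (\<lambda>w. restrict (rv w) (Msg ` S \<union> Edg ` \<alpha>)) = Hrv Q (\<lambda>w. (Fh (fst (to_msg_key w)), Ya (to_msg_key w)))"
      by (rule Hrv_Q_eq_of_fun[where f="\<lambda>(x, y). restrict (\<lambda>l. case l of Edg e \<Rightarrow> y e | _ \<Rightarrow> x l) (Msg ` S \<union> Edg ` \<alpha>)"
            and g="\<lambda>u. (restrict u (Msg ` S), restrict (\<lambda>e. u (Edg e)) \<alpha>)"])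
         (auto simp: Ya_def Fh_def rv_def fun_eq_iff restrict_def msg_head_to_msg_key split: lbl.split)
    then show ?thesis unfolding hvec_def using sub by simp
  qed
  show "hvec (Msg ` S \<union> Edg ` \<alpha>) \<le> hvec (Msg ` S) + hvec (Edg ` \<alpha>)"
    unfolding e1 e2 e3 by (rule Hrv_subadditive[OF finite_set_pmf_Q])
  have "Hrv Q (\<lambda>w. Fh (fst (to_msg_key w))) + Hrv Q (\<lambda>w. Ya (to_msg_key w)) - Hrv Q (\<lambda>w. (Fh (fst (to_msg_key w)), Ya (to_msg_key w)))
     \<le> Hrv Q (\<lambda>w. fst (to_msg_key w)) + Hrv Q (\<lambda>w. Ya (to_msg_key w)) - Hrv Q (\<lambda>w. (fst (to_msg_key w), Ya (to_msg_key w)))"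
    by (rule Hrv_mutual_info_comp_le[OF finite_set_pmf_Q])
  also have "\<dots> = MI P (\<lambda>(m,k). m) Ya"
    unfolding MI_def Hrv_P_eq_Hrv_Q by (simp add: case_prod_beta)
  finally show "hvec (Msg ` S) + hvec (Edg ` \<alpha>) - hvec (Msg ` S \<union> Edg ` \<alpha>) \<le> MI P (\<lambda>(m,k). m) (\<lambda>\<omega>. restrict (\<lambda>e. W e \<omega>) \<alpha>)"
    unfolding e1 e2 e3 Ya_def .
qed

lemma head_bits_le_rate: "real (head_bits s) \<le> real n * max (r s) 0 + 1"
proof -
  have "real (head_bits s) \<le> real (nat \<lceil>real n * r s\<rceil>)" unfolding head_bits_def by simp
  also have "\<dots> \<le> real n * max (r s) 0 + 1"
  proof (cases "0 \<le> r s")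
    case True
    then have "real (nat \<lceil>real n * r s\<rceil>) = of_int \<lceil>real n * r s\<rceil>" by simp
    also have "\<dots> \<le> real n * r s + 1" by linarith
    finally show ?thesis using True by simp
  next
    case False
    then have "real n * r s \<le> 0" by (simp add: mult_nonneg_nonpos)
    then have "\<lceil>real n * r s\<rceil> \<le> 0" by linarith
    then show ?thesis by simp
  qed
  finally show ?thesis .
qed

lemma rate_le_head_bits:
  assumes n: "0 < n" and eps: "0 \<le> \<epsilon>"
    and rate: "real (nat \<lfloor>real n * rm s\<rfloor>) / real n \<ge> r s - \<epsilon>"
  shows "real n * (r s - \<epsilon>) \<le> real (head_bits s)"
proof (cases "msg_bits s \<le> nat \<lceil>real n * r s\<rceil>")
  case True
  then have "head_bits s = msg_bits s" unfolding head_bits_def by simp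
  moreover have "real n * (r s - \<epsilon>) \<le> real (msg_bits s)"
    using rate n unfolding msg_bits_def by (simp add: field_simps)
  ultimately show ?thesis by simp
next
  case False
  then have b: "head_bits s = nat \<lceil>real n * r s\<rceil>" unfolding head_bits_def by simp
  have "real n * (r s - \<epsilon>) \<le> real n * r s" using eps n by (simp add: algebra_simps)
  also have "\<dots> \<le> real (nat \<lceil>real n * r s\<rceil>)" by linarith
  finally show ?thesis using b by simp
qed

definition "alph l = (case l of Msg s \<Rightarrow> {..<n_heads s} | Key s \<Rightarrow> key_class s ` {..<n_tails s} | Edg e \<Rightarrow> Alph e)"

lemma Alph_nonempty: "e \<in> E \<Longrightarrow> Alph e \<noteq> {}"
proof -
  assume e: "e \<in> E"
  obtain w where "w \<in> head_tail_space" using head_tail_space_nonempty by auto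
  then show ?thesis using W_in_Alph[OF _ e] by auto
qed

lemma finite_alph: "l \<in> L \<Longrightarrow> finite (alph l)" and alph_nonempty: "l \<in> L \<Longrightarrow> alph l \<noteq> {}"
  unfolding L_def labels_def alph_def using finite_Alph Alph_nonempty by (auto split: lbl.split simp: lessThan_empty_iff n_heads_def n_tails_def)

lemma rv_in_alph: "w \<in> head_tail_space \<Longrightarrow> l \<in> L \<Longrightarrow> rv w l \<in> alph l"
  unfolding L_def labels_def alph_def rv_def using head_tail_space_bounds W_in_Alph by (auto split: lbl.split)

lemma hvec_le_sum_log_card: "\<gamma> \<subseteq> L \<Longrightarrow> hvec \<gamma> \<le> (\<Sum>l\<in>L. log 2 (real (card (alph l))))"
proof -
  assume g: "\<gamma> \<subseteq> L"
  have fg: "finite \<gamma>" using finite_labels g finite_subset by blast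
  have cpos: "0 < card (alph l)" if "l \<in> L" for l using finite_alph[OF that] alph_nonempty[OF that] by (simp add: card_gt_0_iff)
  have "hvec \<gamma> = Hrv Q (\<lambda>w. restrict (rv w) \<gamma>)" unfolding hvec_def using g by simp
  also have "\<dots> \<le> log 2 (real (card (PiE \<gamma> alph)))"
    by (rule Hrv_le_log_card) (use fg g finite_alph rv_in_alph set_pmf_Q in \<open>auto intro!: finite_PiE\<close>)
  also have "real (card (PiE \<gamma> alph)) = (\<Prod>l\<in>\<gamma>. real (card (alph l)))"
    using fg by (simp add: card_PiE)
  also have "log 2 \<dots> = (\<Sum>l\<in>\<gamma>. log 2 (real (card (alph l))))"
    by (rule log_prod[OF fg]) (use cpos g in auto)
  also have "\<dots> \<le> (\<Sum>l\<in>L. log 2 (real (card (alph l))))"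
    by (rule sum_mono2[OF finite_labels g]) (use cpos in \<open>fastforce simp: Suc_le_eq\<close>)
  finally show ?thesis .
qed

lemma sum_labels: "(\<Sum>l\<in>L. f l) = (\<Sum>s\<in>S. f (Msg s)) + (\<Sum>s\<in>S. f (Key s)) + (\<Sum>e\<in>E. f (Edg e))"
proof -
  have "L = (Msg ` S \<union> Key ` S) \<union> Edg ` E" unfolding L_def labels_def by auto
  then have "(\<Sum>l\<in>L. f l) = (\<Sum>l\<in>Msg ` S \<union> Key ` S. f l) + (\<Sum>l\<in>Edg ` E. f l)"
    by (simp only:) (rule sum.union_disjoint, use finite_S finite_E in auto)
  also have "(\<Sum>l\<in>Msg ` S \<union> Key ` S. f l) = (\<Sum>l\<in>Msg ` S. f l) + (\<Sum>l\<in>Key ` S. f l)"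
    using finite_S by (intro sum.union_disjoint) auto
  finally show ?thesis by (simp add: sum.reindex inj_on_def)
qed

lemma src_out_in_PiE: "x \<in> src_space s \<Longrightarrow> s \<in> S \<Longrightarrow> src_out s x \<in> PiE (Out_edges E tlv s) Alph"
proof -
  assume x: "x \<in> src_space s" and s: "s \<in> S"
  obtain m0 k0 where mk: "x = (m0, k0)" by (cases x)
  define w0 where "w0 = (restrict (\<lambda>s'. if s' = s then m0 else 1) S, restrict (\<lambda>s'. if s' = s then k0 else 1) S)"
  have w0: "w0 \<in> msg_key_space"
    using x s unfolding msg_key_space_eq w0_def mk src_space_def idx_set_def by (auto simp: PiE_iff)
  have "src_enc e x \<in> Alph e" if e: "e \<in> Out_edges E tlv s" for e
  proof -
    have "W e w0 = src_enc e x" using src_enc_eq[OF s e w0] s unfolding w0_def mk by simp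
    moreover have "W e w0 \<in> Alph e" using code w0 Out_edges_subset e unfolding is_code_def msg_key_space_def by blast
    ultimately show ?thesis by simp
  qed
  then show ?thesis unfolding src_out_def by auto
qed

lemma log_card_src_out_le:
  assumes s: "s \<in> S"
  shows "log 2 (real (card (src_out s ` src_space s))) \<le> (\<Sum>e\<in>E. log 2 (real (card (Alph e))))"
proof -
  have finO: "finite (Out_edges E tlv s)" by (rule finite_subset[OF Out_edges_subset finite_E])
  have cA: "0 < card (Alph e)" if "e \<in> E" for e
    using finite_Alph[OF that] Alph_nonempty[OF that] by (simp add: card_gt_0_iff)
  have "src_out s ` src_space s \<subseteq> PiE (Out_edges E tlv s) Alph" using src_out_in_PiE s by blast
  moreover have "finite (PiE (Out_edges E tlv s) Alph)"
    using finO finite_Alph Out_edges_subset by (intro finite_PiE) auto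
  ultimately have "card (src_out s ` src_space s) \<le> (\<Prod>e\<in>Out_edges E tlv s. card (Alph e))"
    using card_mono finO by (fastforce simp: card_PiE)
  moreover have "0 < card (src_out s ` src_space s)"
    using finite_src_space by (simp add: card_gt_0_iff src_space_eq)
  ultimately have "log 2 (real (card (src_out s ` src_space s))) \<le> log 2 (\<Prod>e\<in>Out_edges E tlv s. real (card (Alph e)))"
    by (subst log_le_cancel_iff) (auto simp flip: of_nat_prod)
  also have "\<dots> = (\<Sum>e\<in>Out_edges E tlv s. log 2 (real (card (Alph e))))"
    by (rule log_prod[OF finO]) (use cA Out_edges_subset in auto)
  also have "\<dots> \<le> (\<Sum>e\<in>E. log 2 (real (card (Alph e))))"
    by (rule sum_mono2[OF finite_E Out_edges_subset]) (use cA in \<open>auto simp: Suc_le_eq\<close>)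
  finally show ?thesis .
qed

lemma log_card_key_alph:
  assumes s: "s \<in> S"
  shows "log 2 (real (card (alph (Key s)))) \<le> 1 + real (head_bits s) + (\<Sum>e\<in>E. log 2 (real (card (Alph e))))"
proof -
  have "log 2 (real (card (alph (Key s))))
      \<le> 1 + log 2 (real (n_heads s)) + log 2 (real (card (src_out s ` src_space s)))"
  proof (rule log2_le_Suc_log2_mult)
    show "0 < card (alph (Key s))"
      using finite_alph alph_nonempty s by (simp add: card_gt_0_iff L_def labels_def)
    show "card (alph (Key s)) \<le> n_heads s * card (src_out s ` src_space s) + 1"
      unfolding alph_def using card_key_class_image[of s] by simp
    show "0 < card (src_out s ` src_space s)"
      using finite_src_space by (simp add: card_gt_0_iff src_space_eq)
  qed (rule n_heads_pos)
  also have "log 2 (real (n_heads s)) = real (head_bits s)"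
    unfolding n_heads_def by (simp add: log_nat_power)
  finally show ?thesis using log_card_src_out_le[OF s] by simp
qed

lemma hvec_le_box_bound:
  assumes n: "0 < n" and caps: "\<forall>e\<in>E. log 2 (real (card (Alph e))) / real n \<le> c e"
    and g: "\<gamma> \<subseteq> L"
  shows "hvec \<gamma> \<le> real n * entropy_box_bound S E c r"
proof -
  have lc: "log 2 (real (card (Alph e))) \<le> real n * c e" if "e \<in> E" for e
    using caps that n by (auto simp: divide_le_eq mult.commute)
  have sE: "(\<Sum>e\<in>E. log 2 (real (card (Alph e)))) \<le> real n * (\<Sum>e\<in>E. c e)"
    using lc by (simp add: sum_distrib_left sum_mono)
  have "hvec \<gamma> \<le> (\<Sum>l\<in>L. log 2 (real (card (alph l))))" by (rule hvec_le_sum_log_card[OF g])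
  also have "\<dots> = (\<Sum>s\<in>S. log 2 (real (card (alph (Msg s))))) + (\<Sum>s\<in>S. log 2 (real (card (alph (Key s)))))
                 + (\<Sum>e\<in>E. log 2 (real (card (alph (Edg e)))))" by (rule sum_labels)
  also have "\<dots> \<le> (\<Sum>s\<in>S. real (head_bits s)) + (\<Sum>s\<in>S. 1 + real (head_bits s) + (\<Sum>e\<in>E. log 2 (real (card (Alph e)))))
                 + (\<Sum>e\<in>E. log 2 (real (card (Alph e))))"
  proof -
    have "log 2 (real (card (alph (Msg s)))) = real (head_bits s)" for s
      unfolding alph_def n_heads_def by (simp add: log_nat_power)
    moreover have "(\<Sum>s\<in>S. log 2 (real (card (alph (Key s))))) \<le> (\<Sum>s\<in>S. 1 + real (head_bits s) + (\<Sum>e\<in>E. log 2 (real (card (Alph e)))))"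
      by (rule sum_mono) (rule log_card_key_alph)
    ultimately show ?thesis by (simp add: alph_def)
  qed
  also have "\<dots> \<le> (\<Sum>s\<in>S. real n * (2 * max (r s) 0 + 3 + (\<Sum>e\<in>E. c e))) + real n * (\<Sum>e\<in>E. c e)"
  proof -
    have "real (head_bits s) + (1 + real (head_bits s) + (\<Sum>e\<in>E. log 2 (real (card (Alph e))))) \<le> real n * (2 * max (r s) 0 + 3 + (\<Sum>e\<in>E. c e))" for s
    proof -
      have "1 \<le> real n" using n by simp
      then show ?thesis using head_bits_le_rate[of s] sE by (simp add: algebra_simps)
    qed
    then have "(\<Sum>s\<in>S. real (head_bits s)) + (\<Sum>s\<in>S. 1 + real (head_bits s) + (\<Sum>e\<in>E. log 2 (real (card (Alph e)))))
       \<le> (\<Sum>s\<in>S. real n * (2 * max (r s) 0 + 3 + (\<Sum>e\<in>E. c e)))"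
      by (simp add: sum.distrib[symmetric] sum_mono)
    then show ?thesis using sE by linarith
  qed
  also have "\<dots> = real n * entropy_box_bound S E c r" unfolding entropy_box_bound_def by (simp add: sum_distrib_left algebra_simps)
  finally show ?thesis .
qed

lemma n_pos: "0 < n"
  using code unfolding is_code_def by simp

definition "nhvec = (\<lambda>\<gamma>. hvec \<gamma> / real n)"

lemma nhvec_closed_conv:
  "nhvec \<in> closed_conv (entropic S E \<inter> Gamma1 S E \<inter> Gamma2 S E tlv \<inter> Gamma3 V E tlv hdv S T)"
proof -
  have "(\<lambda>\<gamma>. (1 / real n) * hvec \<gamma>) \<in> closed_conv (entropic S E \<inter> Gamma1 S E \<inter> Gamma2 S E tlv \<inter> Gamma3 V E tlv hdv S T)"
    by (rule closed_conv_scaled[OF _ zero_in_entropic_Gammas])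
       (use hvec_entropic hvec_Gamma1 hvec_Gamma2 hvec_Gamma3 n_pos in auto)
  then show ?thesis unfolding nhvec_def by simp
qed

lemma nhvec_in_entropy_box:
  assumes caps: "\<forall>e\<in>E. log 2 (real (card (Alph e))) / real n \<le> c e"
  shows "nhvec \<in> entropy_box S E (entropy_box_bound S E c r)"
proof -
  have "0 \<le> nhvec \<gamma> \<and> nhvec \<gamma> \<le> entropy_box_bound S E c r" if g: "\<gamma> \<subseteq> L" for \<gamma>
  proof
    show "0 \<le> nhvec \<gamma>" unfolding nhvec_def hvec_def by (simp add: Hrv_nonneg)
    show "nhvec \<gamma> \<le> entropy_box_bound S E c r"
      using hvec_le_box_bound[OF n_pos caps g] n_pos
      unfolding nhvec_def by (simp add: divide_le_eq mult.commute)
  qed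
  then show ?thesis
    unfolding entropy_box_def L_def by (auto simp: nhvec_def hvec_def L_def)
qed

lemma nhvec_Edg_le:
  assumes caps: "\<forall>e\<in>E. log 2 (real (card (Alph e))) / real n \<le> c e" and e: "e \<in> E"
  shows "nhvec {Edg e} \<le> c e"
proof -
  have "hvec {Edg e} / real n \<le> log 2 (real (card (Alph e))) / real n"
    using hvec_Edg_le[OF e] n_pos by (simp add: divide_right_mono)
  with caps e show ?thesis unfolding nhvec_def by fastforce
qed

lemma nhvec_Gamma4:
  assumes t: "t \<in> T" and eps: "0 \<le> \<epsilon>"
    and dec: "\<forall>s\<in>beta t. measure_pmf.prob P {(m,k). decode_est E hdv Dec W t s (m,k) \<noteq> m s} \<le> \<epsilon>"
  shows "nhvec (Msg ` beta t \<union> Edg ` In_edges E hdv t)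
      \<le> nhvec (Edg ` In_edges E hdv t) + (1 / real n + real (card S) * \<epsilon> * (\<Sum>s\<in>S. max (r s) 0 + 1))"
proof -
  let ?MI = "Msg ` beta t \<union> Edg ` In_edges E hdv t" and ?I = "Edg ` In_edges E hdv t"
  have rn: "0 < real n" using n_pos by simp
  have heads: "(\<Sum>s\<in>S. real (head_bits s)) \<le> real n * (\<Sum>s\<in>S. max (r s) 0 + 1)"
  proof -
    have "real (head_bits s) \<le> real n * (max (r s) 0 + 1)" for s
      using head_bits_le_rate[of s] n_pos by (simp add: algebra_simps)
    then show ?thesis by (simp add: sum_distrib_left sum_mono)
  qed
  have "hvec ?MI \<le> hvec ?I + 1 + (real (card S) * \<epsilon>) * (\<Sum>s\<in>S. real (head_bits s))"
    by (rule hvec_Gamma4_fano[OF t eps dec])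
  also have "\<dots> \<le> hvec ?I + 1 + (real (card S) * \<epsilon>) * (real n * (\<Sum>s\<in>S. max (r s) 0 + 1))"
    using heads eps by (intro add_left_mono mult_left_mono) auto
  finally have "hvec ?MI / real n
      \<le> (hvec ?I + 1 + (real (card S) * \<epsilon>) * (real n * (\<Sum>s\<in>S. max (r s) 0 + 1))) / real n"
    using rn by (simp add: divide_right_mono)
  then show ?thesis unfolding nhvec_def using rn by (simp add: field_simps)
qed

lemma nhvec_Gamma6:
  assumes a: "\<alpha> \<in> Aw"
    and sec: "MI P (\<lambda>(m,k). m) (\<lambda>\<omega>. restrict (\<lambda>e. W e \<omega>) \<alpha>) / real n \<le> \<epsilon>"
  shows "nhvec (Msg ` S) + nhvec (Edg ` \<alpha>) \<le> nhvec (Msg ` S \<union> Edg ` \<alpha>) + \<epsilon>"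
proof -
  have "(hvec (Msg ` S) + hvec (Edg ` \<alpha>) - hvec (Msg ` S \<union> Edg ` \<alpha>)) / real n
      \<le> MI P (\<lambda>(m,k). m) (\<lambda>\<omega>. restrict (\<lambda>e. W e \<omega>) \<alpha>) / real n"
    using hvec_Gamma6(2)[OF a] n_pos by (simp add: divide_right_mono)
  with sec show ?thesis unfolding nhvec_def by (simp add: diff_divide_distrib add_divide_distrib)
qed

lemma nhvec_Msg_ge:
  assumes s: "s \<in> S" and eps: "0 \<le> \<epsilon>"
    and rate: "real (nat \<lfloor>real n * rm s\<rfloor>) / real n \<ge> r s - \<epsilon>"
  shows "r s - \<epsilon> \<le> nhvec {Msg s}"
  using rate_le_head_bits[OF n_pos eps rate] n_pos
  unfolding nhvec_def hvec_Msg[OF s] by (simp add: field_simps)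

lemma nhvec_relaxed:
  assumes eps: "0 \<le> \<epsilon>"
    and secure: "weakly_secure_code V E tlv hdv S T beta c Aw r \<epsilon> n rm rk Alph W Dec"
  shows "nhvec \<in> relaxed_region V E tlv hdv S T beta c Aw r
           (1 / real n + (real (card S) * (\<Sum>s\<in>S. max (r s) 0 + 1) + 1) * \<epsilon>)"
    (is "_ \<in> relaxed_region _ _ _ _ _ _ _ _ _ _ ?d")
proof -
  have P: "pmf_of_set (sample_space S n rm rk) = P" unfolding P_def msg_key_space_def ..
  from secure have rates: "\<forall>s\<in>S. real (nat \<lfloor>real n * rm s\<rfloor>) / real n \<ge> r s - \<epsilon>"
    and caps: "\<forall>e\<in>E. log 2 (real (card (Alph e))) / real n \<le> c e"
    and sec: "\<forall>\<alpha>\<in>Aw. MI P (\<lambda>(m,k). m) (\<lambda>\<omega>. restrict (\<lambda>e. W e \<omega>) \<alpha>) / real n \<le> \<epsilon>"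
    and dec: "\<forall>t\<in>T. \<forall>s\<in>beta t. measure_pmf.prob P {(m,k). decode_est E hdv Dec W t s (m,k) \<noteq> m s} \<le> \<epsilon>"
    unfolding weakly_secure_code_def Let_def P by auto
  have "0 \<le> real (card S) * \<epsilon> * (\<Sum>s\<in>S. max (r s) 0 + 1)"
    using eps by (intro mult_nonneg_nonneg sum_nonneg) auto
  then have eps_d: "\<epsilon> \<le> ?d" using n_pos by (simp add: algebra_simps)
  have fano_d: "1 / real n + real (card S) * \<epsilon> * (\<Sum>s\<in>S. max (r s) 0 + 1) \<le> ?d"
    using eps by (simp add: algebra_simps)
  have lower: "nhvec (Edg ` In_edges E hdv t) \<le> nhvec (Msg ` beta t \<union> Edg ` In_edges E hdv t)"
    if "t \<in> T" for t
    using hvec_Gamma4_lower[OF that] n_pos unfolding nhvec_def by (simp add: divide_right_mono)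
  have upper: "nhvec (Msg ` S \<union> Edg ` \<alpha>) \<le> nhvec (Msg ` S) + nhvec (Edg ` \<alpha>)" if "\<alpha> \<in> Aw" for \<alpha>
    using hvec_Gamma6(1)[OF that] n_pos
    unfolding nhvec_def by (simp add: divide_right_mono add_divide_distrib[symmetric])
  show ?thesis
    unfolding relaxed_region_def
    using nhvec_closed_conv nhvec_Edg_le[OF caps] lower upper
      order_trans[OF nhvec_Gamma4[OF _ eps] add_left_mono[OF fano_d]] dec
      order_trans[OF nhvec_Gamma6 add_left_mono[OF eps_d]] sec
      order_trans[OF diff_left_mono[OF eps_d] nhvec_Msg_ge[OF _ eps]] rates
    by auto
qed

end

lemma relaxed_region_meets_entropy_box:
  assumes net: "wiretap_network V E tlv hdv S T beta c Aw"
    and x: "x \<in> weak_secrecy_region V E tlv hdv S T beta c Aw" and d: "0 < d"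
  shows "relaxed_region V E tlv hdv S T beta c Aw x d \<inter> entropy_box S E (entropy_box_bound S E c x) \<noteq> {}"
proof -
  define C where "C = real (card S) * (\<Sum>s\<in>S. max (x s) 0 + 1) + 1"
  have C: "1 \<le> C" unfolding C_def by (simp add: sum_nonneg)
  define \<epsilon> where "\<epsilon> = d / (2 * C)"
  have eps: "0 < \<epsilon>" and C_eps: "C * \<epsilon> = d / 2"
    unfolding \<epsilon>_def using d C by auto
  obtain N where N: "\<forall>n\<ge>N. \<exists>rm rk Alph W Dec.
      weakly_secure_code V E tlv hdv S T beta c Aw x \<epsilon> n rm rk Alph W Dec"
    using x eps unfolding weak_secrecy_region_iff by blast
  define n where "n = max N (nat \<lceil>2 / d\<rceil> + 1)"
  have n: "1 / real n \<le> d / 2"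
  proof -
    have n2: "2 / d < real n" unfolding n_def by linarith
    moreover have "0 < 2 / d" using d by simp
    ultimately have "0 < real n" by linarith
    moreover have "2 < d * real n" using n2 d by (simp add: field_simps)
    ultimately show ?thesis by (simp add: field_simps)
  qed
  obtain rm rk Alph W Dec
    where secure: "weakly_secure_code V E tlv hdv S T beta c Aw x \<epsilon> n rm rk Alph W Dec"
    using N[rule_format, of n] unfolding n_def by auto
  interpret wiretap_code V E tlv hdv S T beta c Aw n rm rk Alph W x
    using net secure unfolding weakly_secure_code_def by unfold_locales auto
  have caps: "\<forall>e\<in>E. log 2 (real (card (Alph e))) / real n \<le> c e"
    using secure unfolding weakly_secure_code_def Let_def by auto
  have "nhvec \<in> relaxed_region V E tlv hdv S T beta c Aw x (1 / real n + C * \<epsilon>)"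
    unfolding C_def by (rule nhvec_relaxed[OF _ secure]) (use eps in simp)
  also have "\<dots> \<subseteq> relaxed_region V E tlv hdv S T beta c Aw x d"
    using n C_eps by (intro relaxed_region_mono) simp
  finally show ?thesis using nhvec_in_entropy_box[OF caps] by blast
qed

theorem theorem5:
  fixes V :: "'v set" and E :: "'e set" and tlv hdv :: "'e \<Rightarrow> 'v"
    and S T :: "'v set" and beta :: "'v \<Rightarrow> 'v set" and c :: "'e \<Rightarrow> real"
    and Aw :: "'e set set"
  assumes "wiretap_network V E tlv hdv S T beta c Aw"
  shows "weak_secrecy_region V E tlv hdv S T beta c Aw \<subseteq> outer_region V E tlv hdv S T beta c Aw"
proof
  fix x assume x: "x \<in> weak_secrecy_region V E tlv hdv S T beta c Aw"
  let ?R = "relaxed_region V E tlv hdv S T beta c Aw x"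
  have "\<exists>h\<in>entropy_box S E (entropy_box_bound S E c x). \<forall>d>0. h \<in> ?R d"
  proof (rule compact_Inter_nested_closed[OF compact_entropy_box])
    show "\<And>d. 0 < d \<Longrightarrow> closed (?R d)" by (rule closed_relaxed_region)
    show "\<And>d. 0 < d \<Longrightarrow> ?R d \<inter> entropy_box S E (entropy_box_bound S E c x) \<noteq> {}"
      by (rule relaxed_region_meets_entropy_box[OF assms x])
    show "\<And>d d'. 0 < d \<Longrightarrow> d \<le> d' \<Longrightarrow> ?R d \<subseteq> ?R d'" by (rule relaxed_region_mono)
  qed
  moreover have "\<forall>v. v \<notin> S \<longrightarrow> x v = 0" using x unfolding weak_secrecy_region_iff by blast
  ultimately show "x \<in> outer_region V E tlv hdv S T beta c Aw"
    using outer_region_if_relaxed by blast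
qed

end
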